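(* Let $n\ge1$, $m\ge 2$, let $\rho_1$ be an $n$-qubit density matrix at time $t_1$, and for each $\alpha=1,\dots,m-1$ let $\mathcal{M}_{\alpha+1|\alpha}$ be a CPTP map on $n$ qubits applied between times $t_\alpha$ and $t_{\alpha+1}$, with Choi–Jamiołkowski matrix $M_{\alpha,\alpha+1}:=\sum_{i,j=0}^{2^n-1}(|i\rangle\langle j|)^T\otimes\mathcal{M}_{\alpha+1|\alpha}(|i\rangle\langle j|)$ acting on $H_\alpha\otimes H_{\alpha+1}$. For $2\le k\le m$ let $R_{12\dots k}$ denote the $k$-time $n$-qubit pseudo-density matrix (defined in the context) of the process restricted to times $t_1,\dots,t_k$. Then $R_{12}=\tfrac12(\rho M_{12}+M_{12}\rho)$ with $\rho=\rho_1\otimes\mathbb{1}_2$, and for every $3\le k\le m$, $$R_{12\dots k}=\tfrac12\big(R_{12\dots k-1}M_{k-1,k}+M_{k-1,k}R_{12\dots k-1}\big),$$ where $R_{12\dots k-1}$ is understood as $R_{12\dots k-1}\otimes\mathbb{1}_k$ and $M_{k-1,k}$ as $\mathbb{1}_{1\cdots k-2}\otimes M_{k-1,k}$ on $H_1\otimes\cdots\otimes H_k$.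
   Context: Each $H_\alpha\cong(\mathbb{C}^2)^{\otimes n}$ is the Hilbert space of the $n$ qubits at time $t_\alpha$. Pauli matrices $\sigma_0=\mathbb{1},\sigma_1,\sigma_2,\sigma_3$; $n$-qubit Pauli matrices are $\tilde\sigma_i\in\{\sigma_0,\dots,\sigma_3\}^{\otimes n}$, $i=0,\dots,4^n-1$. The coarse-grained measurement of $\tilde\sigma_i$ at time $t_\alpha$ is the projective measurement $\{P^\alpha_\pm=(\mathbb{1}\pm\tilde\sigma_i)/2\}$ with outcomes $\pm1$ and Lüders update $\rho\mapsto P^\alpha_\pm\rho P^\alpha_\pm$. For indices $(i_1,\dots,i_k)$ the experiment is: prepare $\rho_1$; at each time $t_\alpha$ ($\alpha=1,\dots,k$) perform the coarse-grained measurement of $\tilde\sigma_{i_\alpha}$, and between $t_\alpha$ and $t_{\alpha+1}$ apply $\mathcal{M}_{\alpha+1|\alpha}$ to the post-measurement state. $\langle\tilde\sigma_{i_1},\dots,\tilde\sigma_{i_k}\rangle$ is the expectation of the product of the $k$ outcomes. The $k$-time pseudo-density matrix is $$R_{12\dots k}=\frac{1}{2^{kn}}\sum_{i_1,\dots,i_k=0}^{4^n-1}\langle\tilde\sigma_{i_1},\dots,\tilde\sigma_{i_k}\rangle\,\tilde\sigma_{i_1}\otimes\cdots\otimes\tilde\sigma_{i_k}.$$ *)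

theory Defs
  imports Complex_Main "Jordan_Normal_Form.Matrix"
begin

definition mtrace :: "complex mat \<Rightarrow> complex" where
  "mtrace A = (\<Sum>i<dim_row A. A $$ (i, i))"

text \<open>Kronecker (tensor) product; the left factor is the more significant index.\<close>
definition kron :: "complex mat \<Rightarrow> complex mat \<Rightarrow> complex mat" where
  "kron A B = mat (dim_row A * dim_row B) (dim_col A * dim_col B)
     (\<lambda>(i, j). A $$ (i div dim_row B, j div dim_col B) * B $$ (i mod dim_row B, j mod dim_col B))"

fun kron_list :: "complex mat list \<Rightarrow> complex mat" where
  "kron_list [] = 1\<^sub>m 1"
| "kron_list (A # As) = kron A (kron_list As)"

definition psd :: "nat \<Rightarrow> complex mat \<Rightarrow> bool" where
  "psd N A \<longleftrightarrow> A \<in> carrier_mat N N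
     \<and> (\<forall>i<N. \<forall>j<N. A $$ (j, i) = cnj (A $$ (i, j)))
     \<and> (\<forall>v :: nat \<Rightarrow> complex.
          let q = (\<Sum>i<N. \<Sum>j<N. cnj (v i) * A $$ (i, j) * v j) in Im q = 0 \<and> Re q \<ge> 0)"

definition density_matrix :: "nat \<Rightarrow> complex mat \<Rightarrow> bool" where
  "density_matrix n \<rho> \<longleftrightarrow> psd (2 ^ n) \<rho> \<and> mtrace \<rho> = 1"

text \<open>Block matrix of dimension d*N: (id_d \<otimes> \<Phi>) acts blockwise.\<close>
definition block :: "nat \<Rightarrow> complex mat \<Rightarrow> nat \<Rightarrow> nat \<Rightarrow> complex mat" where
  "block N X a b = mat N N (\<lambda>(i, j). X $$ (a * N + i, b * N + j))"

definition id_tensor :: "nat \<Rightarrow> nat \<Rightarrow> (complex mat \<Rightarrow> complex mat) \<Rightarrow> complex mat \<Rightarrow> complex mat" where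
  "id_tensor d N \<Phi> X = mat (d * N) (d * N)
     (\<lambda>(i, j). \<Phi> (block N X (i div N) (j div N)) $$ (i mod N, j mod N))"

definition cptp :: "nat \<Rightarrow> (complex mat \<Rightarrow> complex mat) \<Rightarrow> bool" where
  "cptp n \<Phi> \<longleftrightarrow>
     (let N = 2 ^ n in
       (\<forall>A \<in> carrier_mat N N. \<Phi> A \<in> carrier_mat N N)
     \<and> (\<forall>A \<in> carrier_mat N N. \<forall>B \<in> carrier_mat N N. \<Phi> (A + B) = \<Phi> A + \<Phi> B)
     \<and> (\<forall>c. \<forall>A \<in> carrier_mat N N. \<Phi> (c \<cdot>\<^sub>m A) = c \<cdot>\<^sub>m \<Phi> A)
     \<and> (\<forall>A \<in> carrier_mat N N. mtrace (\<Phi> A) = mtrace A)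
     \<and> (\<forall>d > 0. \<forall>X. psd (d * N) X \<longrightarrow> psd (d * N) (id_tensor d N \<Phi> X)))"

definition ketbra :: "nat \<Rightarrow> nat \<Rightarrow> nat \<Rightarrow> complex mat" where
  "ketbra N i j = mat N N (\<lambda>(a, b). if a = i \<and> b = j then 1 else 0)"

definition choi :: "nat \<Rightarrow> (complex mat \<Rightarrow> complex mat) \<Rightarrow> complex mat" where
  "choi n \<Phi> = (let N = 2 ^ n in
     mat (N * N) (N * N) (\<lambda>(r, c).
       \<Sum>i<N. \<Sum>j<N. kron (transpose_mat (ketbra N i j)) (\<Phi> (ketbra N i j)) $$ (r, c)))"

definition pauli :: "nat \<Rightarrow> complex mat" where
  "pauli k = (if k = 0 then mat_of_rows_list 2 [[1, 0], [0, 1]]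
      else if k = 1 then mat_of_rows_list 2 [[0, 1], [1, 0]]
      else if k = 2 then mat_of_rows_list 2 [[0, -\<i>], [\<i>, 0]]
      else mat_of_rows_list 2 [[1, 0], [0, -1]])"

text \<open>n-qubit Pauli matrix with index i < 4^n (base-4 digits of i, most significant first).\<close>
fun pauli_n :: "nat \<Rightarrow> nat \<Rightarrow> complex mat" where
  "pauli_n 0 i = 1\<^sub>m 1"
| "pauli_n (Suc n) i = kron (pauli (i div 4 ^ n)) (pauli_n n (i mod 4 ^ n))"

text \<open>Projectors of the coarse-grained measurement, outcome s = +1 or -1.\<close>
definition proj :: "nat \<Rightarrow> nat \<Rightarrow> int \<Rightarrow> complex mat" where
  "proj n i s = (1 / 2 :: complex) \<cdot>\<^sub>m (1\<^sub>m (2 ^ n) + of_int s \<cdot>\<^sub>m pauli_n n i)"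

text \<open>Given the (unnormalised) state sigma at time t_alpha and the remaining Pauli indices
  i_alpha, ..., i_k, the (probability-weighted) expectation of the product of the remaining
  outcomes. Mc alpha is the channel applied between t_alpha and t_(alpha+1).\<close>
fun corr_aux :: "nat \<Rightarrow> (nat \<Rightarrow> complex mat \<Rightarrow> complex mat) \<Rightarrow> nat \<Rightarrow> complex mat \<Rightarrow> nat list \<Rightarrow> complex" where
  "corr_aux n Mc \<alpha> \<sigma> [] = mtrace \<sigma>"
| "corr_aux n Mc \<alpha> \<sigma> [i] =
     (\<Sum>s\<in>{1, -1::int}. of_int s * mtrace (proj n i s * \<sigma> * proj n i s))"
| "corr_aux n Mc \<alpha> \<sigma> (i # j # is) =
     (\<Sum>s\<in>{1, -1::int}. of_int s *
        corr_aux n Mc (Suc \<alpha>) (Mc \<alpha> (proj n i s * \<sigma> * proj n i s)) (j # is))"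

definition corr :: "nat \<Rightarrow> complex mat \<Rightarrow> (nat \<Rightarrow> complex mat \<Rightarrow> complex mat) \<Rightarrow> nat list \<Rightarrow> complex" where
  "corr n \<rho>1 Mc is = corr_aux n Mc 1 \<rho>1 is"

definition pdm :: "nat \<Rightarrow> complex mat \<Rightarrow> (nat \<Rightarrow> complex mat \<Rightarrow> complex mat) \<Rightarrow> nat \<Rightarrow> complex mat" where
  "pdm n \<rho>1 Mc k = (let D = 2 ^ (k * n) in
     mat D D (\<lambda>(r, c). (1 / of_nat D) *
       (\<Sum>is\<in>{is. length is = k \<and> set is \<subseteq> {..<4 ^ n}}.
          corr n \<rho>1 Mc is * kron_list (map (pauli_n n) is) $$ (r, c))))"

end

theory Submission
  imports Defs
begin

(* For the Lueders update, the outcome-weighted sum over the two results of measuring a Pauli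
   matrix P is the Jordan product P_+ s P_+ - P_- s P_- = (P s + s P) / 2.  So each temporal
   correlation is a trace tr (P_(i_k) tau), where the outcome-weighted state tau_(i_1 ... i_(k-1))
   arises from rho_1 by alternately taking Jordan products with the measured Pauli matrices and
   applying the channels.  The completeness relation
     sum_j (P_j)_(u v) (P_j)_(x y) = 2^n [u = y] [v = x]
   of the Pauli basis yields the block decomposition
     R_(1..k) = 2^(-(k-1) n) sum_(i_1 ... i_(k-1)) P_(i_1) (x) ... (x) P_(i_(k-1)) (x) tau_(i_1 ... i_(k-1)),
   and, once the last channel is written through its Choi matrix M, the same relation turns the
   sum over the last two Pauli indices into (tau (x) 1 . M + M . tau (x) 1) / 2.  Comparing the two
   decompositions gives the recursion; k = 2 is the case R_1 = rho_1. *)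

section \<open>Index arithmetic and Kronecker products\<close>

lemma mixed_radix_less:
  fixes i1 i2 a b :: nat
  assumes "i1 < a" and "i2 < b"
  shows "i1 * b + i2 < a * b"
proof -
  have "i1 * b + i2 < Suc i1 * b" using assms(2) by simp
  also have "\<dots> \<le> a * b" using assms(1) by (intro mult_le_mono1) simp
  finally show ?thesis .
qed

lemma eq_mat_mixed_radixI:
  assumes "A \<in> carrier_mat (a * b) (c * d)" and "B \<in> carrier_mat (a * b) (c * d)"
    and "\<And>i1 i2 j1 j2. i1 < a \<Longrightarrow> i2 < b \<Longrightarrow> j1 < c \<Longrightarrow> j2 < d \<Longrightarrow>
           A $$ (i1 * b + i2, j1 * d + j2) = B $$ (i1 * b + i2, j1 * d + j2)"
  shows "A = B"
proof (rule eq_matI)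
  fix i j assume "i < dim_row B" and "j < dim_col B"
  then have i: "i < a * b" and j: "j < c * d" using assms(2) by auto
  then have "b \<noteq> 0" and "d \<noteq> 0" by (metis less_nat_zero_code mult_0_right)+
  then have "A $$ (i div b * b + i mod b, j div d * d + j mod d) = B $$ (i div b * b + i mod b, j div d * d + j mod d)"
    using i j by (intro assms(3)) (simp_all add: less_mult_imp_div_less)
  then show "A $$ (i, j) = B $$ (i, j)" by simp
next
  show "dim_row A = dim_row B" and "dim_col A = dim_col B" using assms(1,2) by auto
qed

lemma sum_lessThan_mult:
  "(\<Sum>t<a * b. f t) = (\<Sum>t1<a. \<Sum>t2<b. f (t1 * b + t2))" for a b :: nat
proof -
  have "(\<Sum>t<a * b. f t) = (\<Sum>t1<a. sum f {t1 * b..<t1 * b + b})"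
    by (rule sum.nat_group[symmetric])
  also have "\<dots> = (\<Sum>t1<a. \<Sum>t2<b. f (t1 * b + t2))"
  proof (rule sum.cong[OF refl])
    fix t1
    show "sum f {t1 * b..<t1 * b + b} = (\<Sum>t2<b. f (t1 * b + t2))"
      using sum.shift_bounds_nat_ivl[of f 0 "t1 * b" b] by (simp add: atLeast0LessThan add.commute)
  qed
  finally show ?thesis .
qed

lemma sum_lessThan_mult_div_mod:
  fixes f g :: "nat \<Rightarrow> 'a::comm_semiring_1"
  shows "(\<Sum>t<a * b. f (t div b) * g (t mod b)) = (\<Sum>t1<a. f t1) * (\<Sum>t2<b. g t2)"
  by (simp add: sum_lessThan_mult sum_product)

lemma sum_sum_delta:
  fixes f :: "nat \<Rightarrow> nat \<Rightarrow> 'a::comm_monoid_add"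
  assumes "x < M" and "y < N"
  shows "(\<Sum>a<M. \<Sum>b<N. if a = x \<and> b = y then f a b else 0) = f x y"
proof -
  have "(\<Sum>a<M. \<Sum>b<N. if a = x \<and> b = y then f a b else 0) = (\<Sum>a<M. if a = x then f a y else 0)"
    using assms by (intro sum.cong refl) auto
  then show ?thesis using assms by simp
qed

lemma sum_sum_if_fst:
  fixes f :: "nat \<Rightarrow> nat \<Rightarrow> 'a::comm_monoid_add"
  assumes "y < M"
  shows "(\<Sum>u<M. \<Sum>v<N. if u = y then f u v else 0) = (\<Sum>v<N. f y v)"
proof -
  have "(\<Sum>v<N. if u = y then f u v else 0) = (if u = y then \<Sum>v<N. f u v else 0)" for u
    by simp
  then show ?thesis using assms by simp
qed

lemma index_mult_sum:
  assumes "i < dim_row A" and "j < dim_col B" and "dim_col A = dim_row B"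
  shows "(A * B) $$ (i, j) = (\<Sum>t<dim_row B. A $$ (i, t) * B $$ (t, j))"
  using assms by (auto simp: scalar_prod_def atLeast0LessThan intro: sum.cong)

lemma dim_kron [simp]:
  "dim_row (kron A B) = dim_row A * dim_row B"
  "dim_col (kron A B) = dim_col A * dim_col B"
  unfolding kron_def by simp_all

lemma kron_carrier:
  "A \<in> carrier_mat a b \<Longrightarrow> B \<in> carrier_mat c d \<Longrightarrow> kron A B \<in> carrier_mat (a * c) (b * d)"
  unfolding carrier_mat_def by simp

lemma index_kron:
  "i < dim_row A * dim_row B \<Longrightarrow> j < dim_col A * dim_col B \<Longrightarrow>
   kron A B $$ (i, j) = A $$ (i div dim_row B, j div dim_col B) * B $$ (i mod dim_row B, j mod dim_col B)"
  unfolding kron_def by simp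

lemma index_kron_pair:
  assumes "A \<in> carrier_mat a b" and "B \<in> carrier_mat c d"
    and "i1 < a" and "j1 < b" and "i2 < c" and "j2 < d"
  shows "kron A B $$ (i1 * c + i2, j1 * d + j2) = A $$ (i1, j1) * B $$ (i2, j2)"
  using assms by (simp add: index_kron mixed_radix_less)

lemma index_kron_one_right:
  assumes "\<tau> \<in> carrier_mat N N" and "x1 < N" and "x2 < N" and "t1 < N" and "t2 < N"
  shows "kron \<tau> (1\<^sub>m N) $$ (x1 * N + x2, t1 * N + t2) = \<tau> $$ (x1, t1) * (if x2 = t2 then 1 else 0)"
  using index_kron_pair[OF assms(1) one_carrier_mat] assms by simp

lemma kron_assoc: "kron (kron A B) C = kron A (kron B C)"
proof (rule eq_matI)
  fix i j assume i: "i < dim_row (kron A (kron B C))" and j: "j < dim_col (kron A (kron B C))"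
  let ?rb = "dim_row B" and ?rc = "dim_row C" and ?cb = "dim_col B" and ?cc = "dim_col C"
  have pos: "?rb > 0" "?rc > 0" "?cb > 0" "?cc > 0" using i j by (auto intro!: gr0I)
  have i': "i < dim_row A * ?rb * ?rc" and j': "j < dim_col A * ?cb * ?cc"
    using i j by (simp_all add: mult.assoc)
  have i2: "i div ?rc < dim_row A * ?rb" and j2: "j div ?cc < dim_col A * ?cb"
    using i' j' by (simp_all add: less_mult_imp_div_less)
  have e1: "i div ?rc div ?rb = i div (?rb * ?rc)" and e2: "j div ?cc div ?cb = j div (?cb * ?cc)"
    by (metis div_mult2_eq mult.commute)+
  have "i mod (?rb * ?rc) = ?rc * (i div ?rc mod ?rb) + i mod ?rc"
    by (metis mod_mult2_eq mult.commute)
  then have e3: "i div ?rc mod ?rb = i mod (?rb * ?rc) div ?rc" using pos by simp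
  have "j mod (?cb * ?cc) = ?cc * (j div ?cc mod ?cb) + j mod ?cc"
    by (metis mod_mult2_eq mult.commute)
  then have e4: "j div ?cc mod ?cb = j mod (?cb * ?cc) div ?cc" using pos by simp
  have e5: "i mod ?rc = i mod (?rb * ?rc) mod ?rc" and e6: "j mod ?cc = j mod (?cb * ?cc) mod ?cc"
    by (simp_all add: mod_mod_cancel)
  have m: "i mod (?rb * ?rc) < ?rb * ?rc" "j mod (?cb * ?cc) < ?cb * ?cc" using pos by simp_all
  have "kron (kron A B) C $$ (i, j) = kron A B $$ (i div ?rc, j div ?cc) * C $$ (i mod ?rc, j mod ?cc)"
    using i' j' by (intro index_kron) (simp_all add: mult.assoc)
  also have "\<dots> = A $$ (i div ?rc div ?rb, j div ?cc div ?cb) * B $$ (i div ?rc mod ?rb, j div ?cc mod ?cb)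
        * C $$ (i mod ?rc, j mod ?cc)"
    using i2 j2 by (subst index_kron) simp_all
  also have "\<dots> = A $$ (i div (?rb * ?rc), j div (?cb * ?cc))
        * (B $$ (i mod (?rb * ?rc) div ?rc, j mod (?cb * ?cc) div ?cc)
           * C $$ (i mod (?rb * ?rc) mod ?rc, j mod (?cb * ?cc) mod ?cc))"
    unfolding e1 e2 e3 e4 by (simp add: mult.assoc flip: e5 e6)
  also have "\<dots> = kron A (kron B C) $$ (i, j)"
    using i j m by (simp add: index_kron)
  finally show "kron (kron A B) C $$ (i, j) = kron A (kron B C) $$ (i, j)" .
qed (simp_all add: mult.assoc)

lemma kron_mixed_product:
  assumes "dim_col A = dim_row C" and "dim_col B = dim_row D"
  shows "kron A B * kron C D = kron (A * C) (B * D)"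
proof (rule eq_matI)
  fix i j assume i: "i < dim_row (kron (A * C) (B * D))" and j: "j < dim_col (kron (A * C) (B * D))"
  have pos: "dim_row B > 0" "dim_col D > 0" using i j by (auto intro!: gr0I)
  have i1: "i div dim_row B < dim_row A" and j1: "j div dim_col D < dim_col C"
    using i j by (simp_all add: less_mult_imp_div_less)
  have "(kron A B * kron C D) $$ (i, j)
      = (\<Sum>t < dim_col A * dim_col B. kron A B $$ (i, t) * kron C D $$ (t, j))"
    using i j assms by (subst index_mult_sum) auto
  also have "\<dots> = (\<Sum>t < dim_col A * dim_col B.
      (A $$ (i div dim_row B, t div dim_col B) * C $$ (t div dim_col B, j div dim_col D)) *
      (B $$ (i mod dim_row B, t mod dim_col B) * D $$ (t mod dim_col B, j mod dim_col D)))"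
    using i j assms by (intro sum.cong refl) (simp add: index_kron ac_simps)
  also have "\<dots> = (\<Sum>t1 < dim_col A. A $$ (i div dim_row B, t1) * C $$ (t1, j div dim_col D)) *
       (\<Sum>t2 < dim_col B. B $$ (i mod dim_row B, t2) * D $$ (t2, j mod dim_col D))"
    by (rule sum_lessThan_mult_div_mod)
  also have "\<dots> = kron (A * C) (B * D) $$ (i, j)"
    using i j i1 j1 pos assms by (simp add: index_kron scalar_prod_def atLeast0LessThan)
  finally show "(kron A B * kron C D) $$ (i, j) = kron (A * C) (B * D) $$ (i, j)" .
qed auto

lemma kron_one_left: "kron (1\<^sub>m 1) A = A"
  by (rule eq_matI) (simp_all add: index_kron)

lemma kron_one_right: "kron A (1\<^sub>m 1) = A"
  by (rule eq_matI) (simp_all add: index_kron)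

section \<open>Traces and the Jordan product\<close>

lemma mtrace_mult:
  assumes "A \<in> carrier_mat N K" and "B \<in> carrier_mat K N"
  shows "mtrace (A * B) = (\<Sum>a<N. \<Sum>b<K. A $$ (a, b) * B $$ (b, a))"
proof -
  have "(A * B) $$ (a, a) = (\<Sum>b<K. A $$ (a, b) * B $$ (b, a))" if "a < N" for a
    using assms that by (subst index_mult_sum) auto
  moreover have "dim_row (A * B) = N" using assms by simp
  ultimately show ?thesis unfolding mtrace_def by simp
qed

lemma mtrace_add_smult:
  assumes "A \<in> carrier_mat N N" and "B \<in> carrier_mat N N"
  shows "mtrace (A + c \<cdot>\<^sub>m B) = mtrace A + c * mtrace B"
  using assms unfolding mtrace_def by (simp add: sum.distrib sum_distrib_left)

lemma mtrace_mult_comm: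
  assumes "A \<in> carrier_mat N N" and "B \<in> carrier_mat N N"
  shows "mtrace (A * B) = mtrace (B * A)"
proof -
  have "mtrace (A * B) = (\<Sum>a<N. \<Sum>b<N. B $$ (b, a) * A $$ (a, b))"
    using assms by (simp add: mtrace_mult mult.commute)
  also have "\<dots> = mtrace (B * A)"
    using assms by (subst sum.swap) (simp add: mtrace_mult)
  finally show ?thesis .
qed

definition jordan :: "complex mat \<Rightarrow> complex mat \<Rightarrow> complex mat" where
  "jordan A B = (1 / 2 :: complex) \<cdot>\<^sub>m (A * B + B * A)"

lemma jordan_carrier:
  "A \<in> carrier_mat N N \<Longrightarrow> B \<in> carrier_mat N N \<Longrightarrow> jordan A B \<in> carrier_mat N N"
  unfolding jordan_def by simp

lemma index_jordan:
  assumes "A \<in> carrier_mat N N" and "B \<in> carrier_mat N N" and "u < N" and "v < N"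
  shows "jordan A B $$ (u, v) = (1 / 2) * ((\<Sum>t<N. A $$ (u, t) * B $$ (t, v)) + (\<Sum>t<N. B $$ (u, t) * A $$ (t, v)))"
  using assms unfolding jordan_def by (simp add: index_mult_sum del: index_mult_mat(1))

lemma mtrace_jordan:
  assumes "A \<in> carrier_mat N N" and "B \<in> carrier_mat N N"
  shows "mtrace (jordan A B) = mtrace (A * B)"
proof -
  have "mtrace (jordan A B) = (1 / 2) * (mtrace (A * B) + mtrace (B * A))"
    using assms unfolding jordan_def mtrace_def
    by (simp add: sum.distrib add_divide_distrib sum_divide_distrib[symmetric])
  then show ?thesis using mtrace_mult_comm[OF assms] by simp
qed

lemma jordan_kron_one_left:
  assumes K: "K \<in> carrier_mat a a" and T: "T \<in> carrier_mat b b" and C: "C \<in> carrier_mat b b"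
  shows "jordan (kron K T) (kron (1\<^sub>m a) C) = kron K (jordan T C)"
proof -
  have "kron K T * kron (1\<^sub>m a) C = kron K (T * C)" and "kron (1\<^sub>m a) C * kron K T = kron K (C * T)"
    using assms by (simp_all add: kron_mixed_product)
  then have "jordan (kron K T) (kron (1\<^sub>m a) C) = (1 / 2) \<cdot>\<^sub>m (kron K (T * C) + kron K (C * T))"
    unfolding jordan_def by simp
  also have "\<dots> = kron K (jordan T C)"
  proof (rule eq_mat_mixed_radixI[of _ a b a b])
    fix i1 i2 j1 j2 assume "i1 < a" and "i2 < b" and "j1 < a" and "j2 < b"
    with assms show "((1 / 2) \<cdot>\<^sub>m (kron K (T * C) + kron K (C * T))) $$ (i1 * b + i2, j1 * b + j2)
        = kron K (jordan T C) $$ (i1 * b + i2, j1 * b + j2)"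
      by (simp add: index_kron mixed_radix_less jordan_def distrib_left mult.left_commute)
  qed (use assms in \<open>auto intro!: kron_carrier jordan_carrier\<close>)
  finally show ?thesis .
qed

section \<open>Pauli matrices\<close>

lemma pauli_carrier: "pauli k \<in> carrier_mat 2 2"
  unfolding pauli_def mat_of_rows_list_def carrier_mat_def by simp

lemma dim_pauli [simp]: "dim_row (pauli k) = 2" "dim_col (pauli k) = 2"
  using pauli_carrier[of k] by auto

lemma pauli_n_carrier: "pauli_n n i \<in> carrier_mat (2 ^ n) (2 ^ n)"
proof (induction n arbitrary: i)
  case (Suc n)
  then show ?case using kron_carrier[OF pauli_carrier Suc.IH] by simp
qed simp

lemma dim_pauli_n [simp]: "dim_row (pauli_n n i) = 2 ^ n" "dim_col (pauli_n n i) = 2 ^ n"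
  using pauli_n_carrier[of n i] by auto

lemma pauli_completeness_qubit:
  assumes "u < 2" and "v < 2" and "x < 2" and "y < 2"
  shows "(\<Sum>q<4. pauli q $$ (u, v) * pauli q $$ (x, y)) = (if u = y \<and> v = x then 2 else 0)"
proof -
  have "(\<Sum>q<4. f q) = f 0 + f 1 + f 2 + f 3" for f :: "nat \<Rightarrow> complex"
    by (simp add: numeral_eq_Suc lessThan_Suc add_ac)
  moreover have "u = 0 \<or> u = 1" "v = 0 \<or> v = 1" "x = 0 \<or> x = 1" "y = 0 \<or> y = 1"
    using assms by auto
  ultimately show ?thesis
    by (auto simp: pauli_def mat_of_rows_list_def)
qed

lemma pauli_completeness:
  assumes "u < 2 ^ n" and "v < 2 ^ n" and "x < 2 ^ n" and "y < 2 ^ n"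
  shows "(\<Sum>j<4 ^ n. pauli_n n j $$ (u, v) * pauli_n n j $$ (x, y)) = (if u = y \<and> v = x then 2 ^ n else 0)"
  using assms
proof (induction n arbitrary: u v x y)
  case (Suc n)
  let ?N = "2 ^ n :: nat"
  have d: "u div ?N < 2" "v div ?N < 2" "x div ?N < 2" "y div ?N < 2"
    using Suc.prems by (simp_all add: less_mult_imp_div_less mult.commute)
  have m: "u mod ?N < ?N" "v mod ?N < ?N" "x mod ?N < ?N" "y mod ?N < ?N" by simp_all
  have "(\<Sum>j<4 ^ Suc n. pauli_n (Suc n) j $$ (u, v) * pauli_n (Suc n) j $$ (x, y))
      = (\<Sum>q<4. \<Sum>r<4 ^ n. pauli_n (Suc n) (q * 4 ^ n + r) $$ (u, v) * pauli_n (Suc n) (q * 4 ^ n + r) $$ (x, y))"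
    by (simp add: sum_lessThan_mult)
  also have "\<dots> = (\<Sum>q<4. \<Sum>r<4 ^ n. (pauli q $$ (u div ?N, v div ?N) * pauli q $$ (x div ?N, y div ?N))
          * (pauli_n n r $$ (u mod ?N, v mod ?N) * pauli_n n r $$ (x mod ?N, y mod ?N)))"
    using Suc.prems by (intro sum.cong refl) (simp add: index_kron mult.commute mult.left_commute)
  also have "\<dots> = (\<Sum>q<4. pauli q $$ (u div ?N, v div ?N) * pauli q $$ (x div ?N, y div ?N))
      * (\<Sum>r<4 ^ n. pauli_n n r $$ (u mod ?N, v mod ?N) * pauli_n n r $$ (x mod ?N, y mod ?N))"
    by (simp add: sum_product)
  also have "\<dots> = (if u div ?N = y div ?N \<and> v div ?N = x div ?N then 2 else 0)
      * (if u mod ?N = y mod ?N \<and> v mod ?N = x mod ?N then 2 ^ n else 0)"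
    using pauli_completeness_qubit[OF d] Suc.IH[OF m] by simp
  also have "\<dots> = (if u = y \<and> v = x then 2 ^ Suc n else 0)"
  proof -
    have "a = b \<longleftrightarrow> a div ?N = b div ?N \<and> a mod ?N = b mod ?N" for a b
      by (metis div_mult_mod_eq)
    from this[of u y] this[of v x] show ?thesis by auto
  qed
  finally show ?case .
qed simp

lemma pauli_expansion:
  assumes W: "W \<in> carrier_mat (2 ^ n) (2 ^ n)" and "x < 2 ^ n" and "y < 2 ^ n"
  shows "(\<Sum>j<4 ^ n. mtrace (pauli_n n j * W) * pauli_n n j $$ (x, y)) = 2 ^ n * W $$ (x, y)"
proof -
  let ?N = "2 ^ n :: nat"
  have "(\<Sum>j<4 ^ n. mtrace (pauli_n n j * W) * pauli_n n j $$ (x, y))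
      = (\<Sum>j<4 ^ n. \<Sum>a<?N. \<Sum>b<?N. W $$ (b, a) * (pauli_n n j $$ (a, b) * pauli_n n j $$ (x, y)))"
    by (simp add: mtrace_mult[OF pauli_n_carrier W] sum_distrib_left sum_distrib_right mult_ac)
  also have "\<dots> = (\<Sum>a<?N. \<Sum>b<?N. \<Sum>j<4 ^ n. W $$ (b, a) * (pauli_n n j $$ (a, b) * pauli_n n j $$ (x, y)))"
    by (subst sum.swap) (simp add: sum.swap[of _ "{..<4 ^ n}"])
  also have "\<dots> = (\<Sum>a<?N. \<Sum>b<?N. W $$ (b, a) * (\<Sum>j<4 ^ n. pauli_n n j $$ (a, b) * pauli_n n j $$ (x, y)))"
    by (simp add: sum_distrib_left)
  also have "\<dots> = (\<Sum>a<?N. \<Sum>b<?N. if a = y \<and> b = x then W $$ (b, a) * 2 ^ n else 0)"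
    using assms by (intro sum.cong refl) (simp add: pauli_completeness)
  also have "\<dots> = W $$ (x, y) * 2 ^ n"
    using assms by (intro sum_sum_delta)
  finally show ?thesis by simp
qed

section \<open>Linear combinations of matrices\<close>

definition lincomb_mat :: "nat \<Rightarrow> nat \<Rightarrow> 'a set \<Rightarrow> ('a \<Rightarrow> complex) \<Rightarrow> ('a \<Rightarrow> complex mat) \<Rightarrow> complex mat" where
  "lincomb_mat r c S f A = mat r c (\<lambda>(i, j). \<Sum>x\<in>S. f x * A x $$ (i, j))"

lemma lincomb_mat_carrier [simp]: "lincomb_mat r c S f A \<in> carrier_mat r c"
  unfolding lincomb_mat_def by simp

lemma dim_lincomb_mat [simp]:
  "dim_row (lincomb_mat r c S f A) = r" "dim_col (lincomb_mat r c S f A) = c"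
  unfolding lincomb_mat_def by simp_all

lemma index_lincomb_mat [simp]:
  "i < r \<Longrightarrow> j < c \<Longrightarrow> lincomb_mat r c S f A $$ (i, j) = (\<Sum>x\<in>S. f x * A x $$ (i, j))"
  unfolding lincomb_mat_def by simp

lemma lincomb_mat_cong:
  assumes "\<And>x. x \<in> S \<Longrightarrow> A x = B x"
  shows "lincomb_mat r c S f A = lincomb_mat r c S f B"
  using assms by (intro eq_matI) simp_all

lemma lincomb_mat_empty: "lincomb_mat r c {} f A = 0\<^sub>m r c"
  by (rule eq_matI) simp_all

lemma lincomb_mat_insert:
  assumes "finite S" and "x \<notin> S" and "A x \<in> carrier_mat r c"
  shows "lincomb_mat r c (insert x S) f A = lincomb_mat r c S f A + f x \<cdot>\<^sub>m A x"
  using assms by (intro eq_matI) auto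

lemma kron_lincomb_mat:
  assumes A: "\<forall>x\<in>S. A x \<in> carrier_mat a b" and Z: "Z \<in> carrier_mat c d"
  shows "kron (lincomb_mat a b S f A) Z = lincomb_mat (a * c) (b * d) S f (\<lambda>x. kron (A x) Z)"
proof (rule eq_mat_mixed_radixI[of _ a c b d])
  fix i1 i2 j1 j2 assume "i1 < a" and "i2 < c" and "j1 < b" and "j2 < d"
  moreover have "kron (A x) Z $$ (i1 * c + i2, j1 * d + j2) = A x $$ (i1, j1) * Z $$ (i2, j2)" if "x \<in> S" for x
    using index_kron_pair[OF bspec[OF A that] Z] calculation by blast
  ultimately show "kron (lincomb_mat a b S f A) Z $$ (i1 * c + i2, j1 * d + j2)
      = lincomb_mat (a * c) (b * d) S f (\<lambda>x. kron (A x) Z) $$ (i1 * c + i2, j1 * d + j2)"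
    by (simp add: index_kron_pair[OF lincomb_mat_carrier Z] mixed_radix_less sum_distrib_right mult.assoc)
qed (use Z in \<open>auto intro: kron_carrier\<close>)

lemma lincomb_mat_mult:
  assumes A: "\<forall>x\<in>S. A x \<in> carrier_mat a b" and B: "B \<in> carrier_mat b c"
  shows "lincomb_mat a b S f A * B = lincomb_mat a c S f (\<lambda>x. A x * B)"
proof (rule eq_matI)
  fix i j assume "i < dim_row (lincomb_mat a c S f (\<lambda>x. A x * B))" and "j < dim_col (lincomb_mat a c S f (\<lambda>x. A x * B))"
  then have i: "i < a" and j: "j < c" by simp_all
  have "(A x * B) $$ (i, j) = (\<Sum>t<b. A x $$ (i, t) * B $$ (t, j))" if "x \<in> S" for x
    using bspec[OF A that] B i j by (subst index_mult_sum) auto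
  then have "lincomb_mat a c S f (\<lambda>x. A x * B) $$ (i, j) = (\<Sum>x\<in>S. \<Sum>t<b. f x * (A x $$ (i, t) * B $$ (t, j)))"
    using i j by (simp add: sum_distrib_left)
  also have "\<dots> = (\<Sum>t<b. (\<Sum>x\<in>S. f x * A x $$ (i, t)) * B $$ (t, j))"
    by (subst sum.swap) (simp add: sum_distrib_right mult.assoc)
  also have "\<dots> = (lincomb_mat a b S f A * B) $$ (i, j)"
    using B i j by (subst index_mult_sum) auto
  finally show "(lincomb_mat a b S f A * B) $$ (i, j) = lincomb_mat a c S f (\<lambda>x. A x * B) $$ (i, j)" ..
qed (use B in auto)

lemma mult_lincomb_mat:
  assumes A: "\<forall>x\<in>S. A x \<in> carrier_mat b c" and B: "B \<in> carrier_mat a b"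
  shows "B * lincomb_mat b c S f A = lincomb_mat a c S f (\<lambda>x. B * A x)"
proof (rule eq_matI)
  fix i j assume "i < dim_row (lincomb_mat a c S f (\<lambda>x. B * A x))" and "j < dim_col (lincomb_mat a c S f (\<lambda>x. B * A x))"
  then have i: "i < a" and j: "j < c" by simp_all
  have "(B * A x) $$ (i, j) = (\<Sum>t<b. B $$ (i, t) * A x $$ (t, j))" if "x \<in> S" for x
    using bspec[OF A that] B i j by (subst index_mult_sum) auto
  then have "lincomb_mat a c S f (\<lambda>x. B * A x) $$ (i, j) = (\<Sum>x\<in>S. \<Sum>t<b. f x * (B $$ (i, t) * A x $$ (t, j)))"
    using i j by (simp add: sum_distrib_left)
  also have "\<dots> = (\<Sum>t<b. B $$ (i, t) * (\<Sum>x\<in>S. f x * A x $$ (t, j)))"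
    by (subst sum.swap) (simp add: sum_distrib_left mult.left_commute)
  also have "\<dots> = (B * lincomb_mat b c S f A) $$ (i, j)"
    using B i j by (subst index_mult_sum) auto
  finally show "(B * lincomb_mat b c S f A) $$ (i, j) = lincomb_mat a c S f (\<lambda>x. B * A x) $$ (i, j)" ..
qed (use B in auto)

lemma jordan_lincomb_mat:
  assumes A: "\<forall>x\<in>S. A x \<in> carrier_mat a a" and B: "B \<in> carrier_mat a a"
  shows "jordan (lincomb_mat a a S f A) B = lincomb_mat a a S f (\<lambda>x. jordan (A x) B)"
proof (rule eq_matI)
  fix i j assume "i < dim_row (lincomb_mat a a S f (\<lambda>x. jordan (A x) B))"
    and "j < dim_col (lincomb_mat a a S f (\<lambda>x. jordan (A x) B))"
  then have i: "i < a" and j: "j < a" by simp_all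
  have "jordan (A x) B $$ (i, j) = (A x * B) $$ (i, j) / 2 + (B * A x) $$ (i, j) / 2" if "x \<in> S" for x
    using bspec[OF A that] B i j unfolding jordan_def by simp
  moreover have "jordan (lincomb_mat a a S f A) B $$ (i, j)
      = lincomb_mat a a S f (\<lambda>x. A x * B) $$ (i, j) / 2 + lincomb_mat a a S f (\<lambda>x. B * A x) $$ (i, j) / 2"
    using i j B unfolding jordan_def lincomb_mat_mult[OF A B] mult_lincomb_mat[OF A B] by simp
  ultimately show "jordan (lincomb_mat a a S f A) B $$ (i, j) = lincomb_mat a a S f (\<lambda>x. jordan (A x) B) $$ (i, j)"
    using i j by (simp add: sum.distrib sum_divide_distrib distrib_left)
qed (use B in \<open>simp_all add: jordan_def\<close>)

section \<open>Channels and their Choi matrices\<close>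

lemma cptpD:
  assumes "cptp n \<Phi>" and "A \<in> carrier_mat (2 ^ n) (2 ^ n)"
  shows "\<Phi> A \<in> carrier_mat (2 ^ n) (2 ^ n)"
    and "B \<in> carrier_mat (2 ^ n) (2 ^ n) \<Longrightarrow> \<Phi> (A + B) = \<Phi> A + \<Phi> B"
    and "\<Phi> (c \<cdot>\<^sub>m A) = c \<cdot>\<^sub>m \<Phi> A"
  using assms unfolding cptp_def Let_def by blast+

lemma cptp_add_smult:
  assumes "cptp n \<Phi>" and "A \<in> carrier_mat (2 ^ n) (2 ^ n)" and "B \<in> carrier_mat (2 ^ n) (2 ^ n)"
  shows "\<Phi> (A + c \<cdot>\<^sub>m B) = \<Phi> A + c \<cdot>\<^sub>m \<Phi> B"
  using assms by (simp add: cptpD)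

lemma cptp_zero:
  assumes "cptp n \<Phi>"
  shows "\<Phi> (0\<^sub>m (2 ^ n) (2 ^ n)) = 0\<^sub>m (2 ^ n) (2 ^ n)"
proof -
  have "0\<^sub>m (2 ^ n) (2 ^ n) = (0 :: complex) \<cdot>\<^sub>m 0\<^sub>m (2 ^ n) (2 ^ n)" by (rule eq_matI) auto
  then have "\<Phi> (0\<^sub>m (2 ^ n) (2 ^ n)) = 0 \<cdot>\<^sub>m \<Phi> (0\<^sub>m (2 ^ n) (2 ^ n))"
    using cptpD(3)[OF assms zero_carrier_mat] by simp
  also have "\<dots> = 0\<^sub>m (2 ^ n) (2 ^ n)"
    using cptpD(1)[OF assms zero_carrier_mat] by (intro eq_matI) auto
  finally show ?thesis .
qed

lemma cptp_lincomb_mat: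
  assumes \<Phi>: "cptp n \<Phi>" and "finite S" and "\<forall>x\<in>S. E x \<in> carrier_mat (2 ^ n) (2 ^ n)"
  shows "\<Phi> (lincomb_mat (2 ^ n) (2 ^ n) S f E) = lincomb_mat (2 ^ n) (2 ^ n) S f (\<lambda>x. \<Phi> (E x))"
  using assms(2,3)
proof (induction S rule: finite_induct)
  case empty
  then show ?case using cptp_zero[OF \<Phi>] by (simp add: lincomb_mat_empty)
next
  case (insert x S)
  then have E: "E x \<in> carrier_mat (2 ^ n) (2 ^ n)" by simp
  have "\<Phi> (lincomb_mat (2 ^ n) (2 ^ n) (insert x S) f E)
      = \<Phi> (lincomb_mat (2 ^ n) (2 ^ n) S f E + f x \<cdot>\<^sub>m E x)"
    using insert.hyps E by (simp add: lincomb_mat_insert)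
  also have "\<dots> = lincomb_mat (2 ^ n) (2 ^ n) S f (\<lambda>x. \<Phi> (E x)) + f x \<cdot>\<^sub>m \<Phi> (E x)"
    using insert by (simp add: cptp_add_smult[OF \<Phi> lincomb_mat_carrier E])
  also have "\<dots> = lincomb_mat (2 ^ n) (2 ^ n) (insert x S) f (\<lambda>x. \<Phi> (E x))"
    using insert.hyps cptpD(1)[OF \<Phi> E] by (simp add: lincomb_mat_insert)
  finally show ?case .
qed

lemma ketbra_carrier: "ketbra N i j \<in> carrier_mat N N"
  unfolding ketbra_def by simp

lemma lincomb_mat_ketbra:
  assumes "X \<in> carrier_mat N N"
  shows "lincomb_mat N N ({..<N} \<times> {..<N}) (\<lambda>s. X $$ s) (\<lambda>s. ketbra N (fst s) (snd s)) = X"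
proof (rule eq_matI)
  fix a b assume "a < dim_row X" and "b < dim_col X"
  then have a: "a < N" and b: "b < N" using assms by auto
  have "lincomb_mat N N ({..<N} \<times> {..<N}) (\<lambda>s. X $$ s) (\<lambda>s. ketbra N (fst s) (snd s)) $$ (a, b)
      = (\<Sum>u<N. \<Sum>v<N. X $$ (u, v) * ketbra N u v $$ (a, b))"
    using a b by (simp add: sum.cartesian_product split_def)
  also have "\<dots> = (\<Sum>u<N. \<Sum>v<N. if u = a \<and> v = b then X $$ (u, v) else 0)"
    using a b by (intro sum.cong refl) (auto simp: ketbra_def)
  also have "\<dots> = X $$ (a, b)"
    using a b by (rule sum_sum_delta)
  finally show "lincomb_mat N N ({..<N} \<times> {..<N}) (\<lambda>s. X $$ s) (\<lambda>s. ketbra N (fst s) (snd s)) $$ (a, b)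
      = X $$ (a, b)" .
qed (use assms in auto)

lemma index_cptp:
  assumes \<Phi>: "cptp n \<Phi>" and X: "X \<in> carrier_mat (2 ^ n) (2 ^ n)" and "x < 2 ^ n" and "y < 2 ^ n"
  shows "\<Phi> X $$ (x, y) = (\<Sum>u<2 ^ n. \<Sum>v<2 ^ n. X $$ (u, v) * \<Phi> (ketbra (2 ^ n) u v) $$ (x, y))"
proof -
  let ?N = "2 ^ n :: nat" and ?S = "{..<2 ^ n} \<times> {..<2 ^ n}"
  have "\<Phi> X = \<Phi> (lincomb_mat ?N ?N ?S (\<lambda>s. X $$ s) (\<lambda>s. ketbra ?N (fst s) (snd s)))"
    using lincomb_mat_ketbra[OF X] by simp
  also have "\<dots> = lincomb_mat ?N ?N ?S (\<lambda>s. X $$ s) (\<lambda>s. \<Phi> (ketbra ?N (fst s) (snd s)))"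
    by (rule cptp_lincomb_mat[OF \<Phi>]) (auto simp: ketbra_carrier)
  finally show ?thesis
    using assms by (simp add: sum.cartesian_product split_def)
qed

lemma choi_carrier: "choi n \<Phi> \<in> carrier_mat (2 ^ n * 2 ^ n) (2 ^ n * 2 ^ n)"
  unfolding choi_def Let_def by simp

lemma index_choi:
  assumes \<Phi>: "cptp n \<Phi>" and "x1 < 2 ^ n" and "x2 < 2 ^ n" and "y1 < 2 ^ n" and "y2 < 2 ^ n"
  shows "choi n \<Phi> $$ (x1 * 2 ^ n + x2, y1 * 2 ^ n + y2) = \<Phi> (ketbra (2 ^ n) y1 x1) $$ (x2, y2)"
proof -
  let ?N = "2 ^ n :: nat"
  have "kron (transpose_mat (ketbra ?N i j)) (\<Phi> (ketbra ?N i j)) $$ (x1 * ?N + x2, y1 * ?N + y2)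
      = (if i = y1 \<and> j = x1 then \<Phi> (ketbra ?N i j) $$ (x2, y2) else 0)" for i j
    using assms index_kron_pair[OF _ cptpD(1)[OF \<Phi> ketbra_carrier], of "transpose_mat (ketbra ?N i j)" ?N ?N]
    by (auto simp: ketbra_def)
  then show ?thesis
    using assms by (simp add: choi_def Let_def mixed_radix_less sum_sum_delta)
qed

section \<open>Lueders measurements and correlations\<close>

lemma proj_carrier: "proj n i s \<in> carrier_mat (2 ^ n) (2 ^ n)"
  unfolding proj_def using pauli_n_carrier[of n i] by simp

lemma dim_proj [simp]: "dim_row (proj n i s) = 2 ^ n" "dim_col (proj n i s) = 2 ^ n"
  using proj_carrier[of n i s] by auto

lemma index_proj:
  "a < 2 ^ n \<Longrightarrow> b < 2 ^ n \<Longrightarrow>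
   proj n i s $$ (a, b) = (1 / 2) * ((if a = b then 1 else 0) + of_int s * pauli_n n i $$ (a, b))"
  unfolding proj_def by simp

lemma index_mult_mult:
  fixes A B C :: "complex mat"
  assumes "A \<in> carrier_mat N N" and "B \<in> carrier_mat N N" and "C \<in> carrier_mat N N" and "a < N" and "b < N"
  shows "(A * B * C) $$ (a, b) = (\<Sum>t<N. \<Sum>u<N. B $$ (u, t) * (A $$ (a, u) * C $$ (t, b)))"
proof -
  have "(A * B * C) $$ (a, b) = (\<Sum>t<N. (A * B) $$ (a, t) * C $$ (t, b))"
    using assms by (subst index_mult_sum) auto
  also have "\<dots> = (\<Sum>t<N. (\<Sum>u<N. A $$ (a, u) * B $$ (u, t)) * C $$ (t, b))"
    using assms by (intro sum.cong refl) (subst index_mult_sum, auto)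
  also have "\<dots> = (\<Sum>t<N. \<Sum>u<N. B $$ (u, t) * (A $$ (a, u) * C $$ (t, b)))"
    unfolding sum_distrib_right by (intro sum.cong refl) (simp add: mult_ac)
  finally show ?thesis .
qed

lemma sum_delta_mult:
  fixes f :: "nat \<Rightarrow> 'a::semiring_1"
  assumes "a < N"
  shows "(\<Sum>u<N. (if a = u then 1 else 0) * f u) = f a"
    and "(\<Sum>u<N. (if u = a then 1 else 0) * f u) = f a"
proof -
  have "(\<Sum>u<N. (if a = u then 1 else 0) * f u) = (\<Sum>u<N. if a = u then f u else 0)"
    and "(\<Sum>u<N. (if u = a then 1 else 0) * f u) = (\<Sum>u<N. if u = a then f u else 0)"
    by (intro sum.cong refl; simp)+
  then show "(\<Sum>u<N. (if a = u then 1 else 0) * f u) = f a"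
    and "(\<Sum>u<N. (if u = a then 1 else 0) * f u) = f a"
    using assms by simp_all
qed

lemma lueders_signed_sum:
  assumes \<sigma>: "\<sigma> \<in> carrier_mat (2 ^ n) (2 ^ n)"
  shows "proj n i 1 * \<sigma> * proj n i 1 + (-1) \<cdot>\<^sub>m (proj n i (-1) * \<sigma> * proj n i (-1)) = jordan (pauli_n n i) \<sigma>"
proof (rule eq_matI)
  let ?N = "2 ^ n :: nat" and ?P = "pauli_n n i"
  let ?d = "\<lambda>x y. (if x = y then 1 else 0) :: complex"
  fix a b assume "a < dim_row (jordan ?P \<sigma>)" and "b < dim_col (jordan ?P \<sigma>)"
  then have a: "a < ?N" and b: "b < ?N" using \<sigma> by (auto simp: jordan_def)
  have "(proj n i 1 * \<sigma> * proj n i 1 + (-1) \<cdot>\<^sub>m (proj n i (-1) * \<sigma> * proj n i (-1))) $$ (a, b)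
      = (proj n i 1 * \<sigma> * proj n i 1) $$ (a, b) - (proj n i (-1) * \<sigma> * proj n i (-1)) $$ (a, b)"
    using a b \<sigma> proj_carrier[of n i] by simp
  also have "\<dots> = (\<Sum>t<?N. \<Sum>u<?N. \<sigma> $$ (u, t) * (proj n i 1 $$ (a, u) * proj n i 1 $$ (t, b)))
      - (\<Sum>t<?N. \<Sum>u<?N. \<sigma> $$ (u, t) * (proj n i (-1) $$ (a, u) * proj n i (-1) $$ (t, b)))"
    by (simp only: index_mult_mult[OF proj_carrier \<sigma> proj_carrier a b])
  also have "\<dots> = (\<Sum>t<?N. \<Sum>u<?N. (1 / 2) * (?d a u * (\<sigma> $$ (u, t) * ?P $$ (t, b)))
      + (1 / 2) * (?d t b * (?P $$ (a, u) * \<sigma> $$ (u, t))))"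
    unfolding sum_subtractf[symmetric]
    using a b by (intro sum.cong refl) (simp add: index_proj field_simps)
  also have "\<dots> = (1 / 2) * ((\<Sum>t<?N. \<Sum>u<?N. ?d a u * (\<sigma> $$ (u, t) * ?P $$ (t, b)))
      + (\<Sum>t<?N. ?d t b * (\<Sum>u<?N. ?P $$ (a, u) * \<sigma> $$ (u, t))))"
    by (simp only: sum.distrib sum_distrib_left distrib_left)
  also have "\<dots> = (1 / 2) * ((\<Sum>t<?N. \<sigma> $$ (a, t) * ?P $$ (t, b)) + (\<Sum>u<?N. ?P $$ (a, u) * \<sigma> $$ (u, b)))"
    using a b by (simp add: sum_delta_mult)
  also have "\<dots> = jordan ?P \<sigma> $$ (a, b)"
    using a b \<sigma> by (simp add: index_jordan[OF pauli_n_carrier \<sigma>] add.commute)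
  finally show "(proj n i 1 * \<sigma> * proj n i 1 + (-1) \<cdot>\<^sub>m (proj n i (-1) * \<sigma> * proj n i (-1))) $$ (a, b)
      = jordan ?P \<sigma> $$ (a, b)" .
qed (use \<sigma> in \<open>simp_all add: jordan_def\<close>)

lemma proj_sandwich_carrier:
  "\<sigma> \<in> carrier_mat (2 ^ n) (2 ^ n) \<Longrightarrow> proj n i s * \<sigma> * proj n i s \<in> carrier_mat (2 ^ n) (2 ^ n)"
  using proj_carrier by (metis mult_carrier_mat)

lemma sandwich_add_smult:
  fixes P A B :: "complex mat"
  assumes "P \<in> carrier_mat N N" and "A \<in> carrier_mat N N" and "B \<in> carrier_mat N N"
  shows "P * (A + c \<cdot>\<^sub>m B) * P = P * A * P + c \<cdot>\<^sub>m (P * B * P)"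
proof -
  have "P * (A + c \<cdot>\<^sub>m B) = P * A + c \<cdot>\<^sub>m (P * B)"
    using assms by (simp add: mult_add_distrib_mat[of _ N N] mult_smult_distrib[of _ N N])
  then have "P * (A + c \<cdot>\<^sub>m B) * P = P * A * P + c \<cdot>\<^sub>m (P * B) * P"
    using assms by (simp add: add_mult_distrib_mat[of _ N N])
  then show ?thesis
    using assms by (simp add: mult_smult_assoc_mat[of _ N N])
qed

lemma corr_aux_add_smult:
  assumes "\<forall>\<beta>\<in>{\<alpha>..<\<alpha> + length is - 1}. cptp n (Mc \<beta>)"
    and "A \<in> carrier_mat (2 ^ n) (2 ^ n)" and "B \<in> carrier_mat (2 ^ n) (2 ^ n)"
  shows "corr_aux n Mc \<alpha> (A + c \<cdot>\<^sub>m B) is = corr_aux n Mc \<alpha> A is + c * corr_aux n Mc \<alpha> B is"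
  using assms
proof (induction n Mc \<alpha> A "is" arbitrary: B rule: corr_aux.induct)
  case (1 n Mc \<alpha> \<sigma>)
  then show ?case by (simp add: mtrace_add_smult)
next
  case (2 n Mc \<alpha> \<sigma> i)
  then have "mtrace (proj n i s * (\<sigma> + c \<cdot>\<^sub>m B) * proj n i s)
      = mtrace (proj n i s * \<sigma> * proj n i s) + c * mtrace (proj n i s * B * proj n i s)" for s
    by (simp add: sandwich_add_smult[OF proj_carrier] mtrace_add_smult[OF proj_sandwich_carrier proj_sandwich_carrier])
  then show ?case by (simp add: algebra_simps)
next
  case (3 n Mc \<alpha> \<sigma> i j "is")
  let ?X = "\<lambda>M s. proj n i s * M * proj n i s"
  have \<Phi>: "cptp n (Mc \<alpha>)" and ch: "\<forall>\<beta>\<in>{Suc \<alpha>..<Suc \<alpha> + length (j # is) - 1}. cptp n (Mc \<beta>)"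
    using "3.prems"(1) by auto
  have "Mc \<alpha> (?X (\<sigma> + c \<cdot>\<^sub>m B) s) = Mc \<alpha> (?X \<sigma> s) + c \<cdot>\<^sub>m Mc \<alpha> (?X B s)" for s
    using "3.prems" by (simp add: sandwich_add_smult[OF proj_carrier] cptp_add_smult[OF \<Phi>] proj_sandwich_carrier)
  moreover have "corr_aux n Mc (Suc \<alpha>) (Mc \<alpha> (?X \<sigma> s) + c \<cdot>\<^sub>m Mc \<alpha> (?X B s)) (j # is)
      = corr_aux n Mc (Suc \<alpha>) (Mc \<alpha> (?X \<sigma> s)) (j # is) + c * corr_aux n Mc (Suc \<alpha>) (Mc \<alpha> (?X B s)) (j # is)"
    if "s \<in> {1, -1}" for s
    by (intro "3.IH"[OF that ch] cptpD(1)[OF \<Phi>] proj_sandwich_carrier "3.prems"(2,3))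
  ultimately show ?case by (simp add: algebra_simps)
qed

lemma corr_aux_singleton:
  assumes "\<sigma> \<in> carrier_mat (2 ^ n) (2 ^ n)"
  shows "corr_aux n Mc \<alpha> \<sigma> [i] = mtrace (pauli_n n i * \<sigma>)"
proof -
  have "corr_aux n Mc \<alpha> \<sigma> [i]
      = mtrace (proj n i 1 * \<sigma> * proj n i 1 + (-1) \<cdot>\<^sub>m (proj n i (-1) * \<sigma> * proj n i (-1)))"
    using assms by (simp add: mtrace_add_smult[OF proj_sandwich_carrier proj_sandwich_carrier])
  also have "\<dots> = mtrace (jordan (pauli_n n i) \<sigma>)"
    by (simp add: lueders_signed_sum[OF assms])
  also have "\<dots> = mtrace (pauli_n n i * \<sigma>)"
    by (rule mtrace_jordan[OF pauli_n_carrier assms])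
  finally show ?thesis .
qed

lemma corr_aux_Cons:
  assumes ch: "\<forall>\<beta>\<in>{\<alpha>..<\<alpha> + length is}. cptp n (Mc \<beta>)"
    and \<sigma>: "\<sigma> \<in> carrier_mat (2 ^ n) (2 ^ n)" and "is \<noteq> []"
  shows "corr_aux n Mc \<alpha> \<sigma> (i # is) = corr_aux n Mc (Suc \<alpha>) (Mc \<alpha> (jordan (pauli_n n i) \<sigma>)) is"
proof -
  obtain j js where "is": "is = j # js" using \<open>is \<noteq> []\<close> by (cases "is") auto
  let ?X = "\<lambda>s. proj n i s * \<sigma> * proj n i s"
  have \<Phi>: "cptp n (Mc \<alpha>)" using ch "is" by auto
  have ch': "\<forall>\<beta>\<in>{Suc \<alpha>..<Suc \<alpha> + length is - 1}. cptp n (Mc \<beta>)" using ch by auto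
  have X: "?X s \<in> carrier_mat (2 ^ n) (2 ^ n)" and M: "Mc \<alpha> (?X s) \<in> carrier_mat (2 ^ n) (2 ^ n)" for s
    using proj_sandwich_carrier[OF \<sigma>] cptpD(1)[OF \<Phi>] by blast+
  have "corr_aux n Mc \<alpha> \<sigma> (i # is)
      = corr_aux n Mc (Suc \<alpha>) (Mc \<alpha> (?X 1)) is + (-1) * corr_aux n Mc (Suc \<alpha>) (Mc \<alpha> (?X (-1))) is"
    using "is" by simp
  also have "\<dots> = corr_aux n Mc (Suc \<alpha>) (Mc \<alpha> (?X 1) + (-1) \<cdot>\<^sub>m Mc \<alpha> (?X (-1))) is"
    by (rule corr_aux_add_smult[OF ch' M M, symmetric])
  also have "\<dots> = corr_aux n Mc (Suc \<alpha>) (Mc \<alpha> (?X 1 + (-1) \<cdot>\<^sub>m ?X (-1))) is"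
    by (simp add: cptp_add_smult[OF \<Phi> X X])
  also have "\<dots> = corr_aux n Mc (Suc \<alpha>) (Mc \<alpha> (jordan (pauli_n n i) \<sigma>)) is"
    by (simp add: lueders_signed_sum[OF \<sigma>])
  finally show ?thesis .
qed

lemma corr_aux_pair:
  assumes "cptp n (Mc \<alpha>)" and "\<sigma> \<in> carrier_mat (2 ^ n) (2 ^ n)"
  shows "corr_aux n Mc \<alpha> \<sigma> [i, j] = mtrace (pauli_n n j * Mc \<alpha> (jordan (pauli_n n i) \<sigma>))"
proof -
  have "corr_aux n Mc \<alpha> \<sigma> [i, j] = corr_aux n Mc (Suc \<alpha>) (Mc \<alpha> (jordan (pauli_n n i) \<sigma>)) [j]"
    by (rule corr_aux_Cons) (use assms in auto)
  also have "\<dots> = mtrace (pauli_n n j * Mc \<alpha> (jordan (pauli_n n i) \<sigma>))"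
    by (rule corr_aux_singleton[OF cptpD(1)[OF assms(1) jordan_carrier[OF pauli_n_carrier assms(2)]]])
  finally show ?thesis .
qed

text \<open>The sum, over all outcome sequences of the measurements of the given Pauli indices, of the
  product of the outcomes times the unnormalised post-measurement state.\<close>

fun signed_evolution :: "nat \<Rightarrow> (nat \<Rightarrow> complex mat \<Rightarrow> complex mat) \<Rightarrow> nat \<Rightarrow> complex mat \<Rightarrow> nat list \<Rightarrow> complex mat" where
  "signed_evolution n Mc \<alpha> \<sigma> [] = \<sigma>"
| "signed_evolution n Mc \<alpha> \<sigma> (i # is) = signed_evolution n Mc (Suc \<alpha>) (Mc \<alpha> (jordan (pauli_n n i) \<sigma>)) is"

lemma signed_evolution_carrier:
  assumes "\<forall>\<beta>\<in>{\<alpha>..<\<alpha> + length is}. cptp n (Mc \<beta>)" and "\<sigma> \<in> carrier_mat (2 ^ n) (2 ^ n)"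
  shows "signed_evolution n Mc \<alpha> \<sigma> is \<in> carrier_mat (2 ^ n) (2 ^ n)"
  using assms
proof (induction "is" arbitrary: \<alpha> \<sigma>)
  case (Cons i "is")
  have "cptp n (Mc \<alpha>)" and ch: "\<forall>\<beta>\<in>{Suc \<alpha>..<Suc \<alpha> + length is}. cptp n (Mc \<beta>)"
    using Cons.prems(1) by auto
  then have "Mc \<alpha> (jordan (pauli_n n i) \<sigma>) \<in> carrier_mat (2 ^ n) (2 ^ n)"
    using cptpD(1) jordan_carrier[OF pauli_n_carrier Cons.prems(2)] by blast
  from Cons.IH[OF ch this] show ?case by simp
qed simp

lemma corr_aux_append:
  assumes "\<forall>\<beta>\<in>{\<alpha>..<\<alpha> + length xs + length ys - 1}. cptp n (Mc \<beta>)"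
    and "\<sigma> \<in> carrier_mat (2 ^ n) (2 ^ n)" and "ys \<noteq> []"
  shows "corr_aux n Mc \<alpha> \<sigma> (xs @ ys) = corr_aux n Mc (\<alpha> + length xs) (signed_evolution n Mc \<alpha> \<sigma> xs) ys"
  using assms
proof (induction xs arbitrary: \<alpha> \<sigma>)
  case (Cons i xs)
  have "cptp n (Mc \<alpha>)" using Cons.prems(1,3) by (cases ys) auto
  then have M: "Mc \<alpha> (jordan (pauli_n n i) \<sigma>) \<in> carrier_mat (2 ^ n) (2 ^ n)"
    using cptpD(1) jordan_carrier[OF pauli_n_carrier Cons.prems(2)] by blast
  have ch: "\<forall>\<beta>\<in>{Suc \<alpha>..<Suc \<alpha> + length xs + length ys - 1}. cptp n (Mc \<beta>)"
    using Cons.prems(1) by auto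
  have "corr_aux n Mc \<alpha> \<sigma> (i # xs @ ys) = corr_aux n Mc (Suc \<alpha>) (Mc \<alpha> (jordan (pauli_n n i) \<sigma>)) (xs @ ys)"
    using Cons.prems by (intro corr_aux_Cons) auto
  also have "\<dots> = corr_aux n Mc (Suc \<alpha> + length xs) (signed_evolution n Mc (Suc \<alpha>) (Mc \<alpha> (jordan (pauli_n n i) \<sigma>)) xs) ys"
    by (rule Cons.IH[OF ch M Cons.prems(3)])
  finally show ?case by simp
qed simp

section \<open>Two-time correlations and the Choi matrix\<close>

lemma sum_pauli_jordan:
  assumes \<tau>: "\<tau> \<in> carrier_mat (2 ^ n) (2 ^ n)"
    and "x1 < 2 ^ n" and "y1 < 2 ^ n" and "u < 2 ^ n" and "v < 2 ^ n"
  shows "(\<Sum>a<4 ^ n. pauli_n n a $$ (x1, y1) * jordan (pauli_n n a) \<tau> $$ (u, v))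
       = 2 ^ n / 2 * ((if y1 = u then \<tau> $$ (x1, v) else 0) + (if x1 = v then \<tau> $$ (u, y1) else 0))"
proof -
  let ?N = "2 ^ n :: nat" and ?P = "pauli_n n"
  have "(\<Sum>a<4 ^ n. ?P a $$ (x1, y1) * jordan (?P a) \<tau> $$ (u, v))
      = (\<Sum>a<4 ^ n. (1 / 2) * ((\<Sum>t<?N. \<tau> $$ (t, v) * (?P a $$ (x1, y1) * ?P a $$ (u, t)))
                             + (\<Sum>t<?N. \<tau> $$ (u, t) * (?P a $$ (x1, y1) * ?P a $$ (t, v)))))"
    using assms
    by (intro sum.cong refl) (simp add: index_jordan[OF pauli_n_carrier \<tau>] sum_distrib_left distrib_left mult_ac)
  also have "\<dots> = (1 / 2) * ((\<Sum>t<?N. \<tau> $$ (t, v) * (\<Sum>a<4 ^ n. ?P a $$ (x1, y1) * ?P a $$ (u, t)))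
                          + (\<Sum>t<?N. \<tau> $$ (u, t) * (\<Sum>a<4 ^ n. ?P a $$ (x1, y1) * ?P a $$ (t, v))))"
    by (simp only: sum_distrib_left[symmetric] sum.distrib)
      (simp only: sum_distrib_left sum.swap[of _ "{..<4 ^ n}" "{..<?N}"])
  also have "\<dots> = (1 / 2) * ((\<Sum>t<?N. \<tau> $$ (t, v) * (if x1 = t \<and> y1 = u then 2 ^ n else 0))
                          + (\<Sum>t<?N. \<tau> $$ (u, t) * (if x1 = v \<and> y1 = t then 2 ^ n else 0)))"
    using assms by (simp add: pauli_completeness)
  also have "\<dots> = 2 ^ n / 2 * ((if y1 = u then \<tau> $$ (x1, v) else 0) + (if x1 = v then \<tau> $$ (u, y1) else 0))"
    using assms by (simp add: if_distrib[of "\<lambda>z. _ * z"] sum.If_cases) (simp add: algebra_simps)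
  finally show ?thesis .
qed

lemma sum_pauli_channel_jordan:
  assumes \<Phi>: "cptp n \<Phi>" and \<tau>: "\<tau> \<in> carrier_mat (2 ^ n) (2 ^ n)"
    and "x1 < 2 ^ n" and "y1 < 2 ^ n" and "x2 < 2 ^ n" and "y2 < 2 ^ n"
  shows "(\<Sum>a<4 ^ n. pauli_n n a $$ (x1, y1) * \<Phi> (jordan (pauli_n n a) \<tau>) $$ (x2, y2))
       = 2 ^ n / 2 * ((\<Sum>v<2 ^ n. \<tau> $$ (x1, v) * \<Phi> (ketbra (2 ^ n) y1 v) $$ (x2, y2))
                    + (\<Sum>u<2 ^ n. \<Phi> (ketbra (2 ^ n) u x1) $$ (x2, y2) * \<tau> $$ (u, y1)))"
proof -
  let ?N = "2 ^ n :: nat" and ?P = "pauli_n n"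
  let ?G = "\<lambda>u v. \<Phi> (ketbra ?N u v) $$ (x2, y2)"
  have "(\<Sum>a<4 ^ n. ?P a $$ (x1, y1) * \<Phi> (jordan (?P a) \<tau>) $$ (x2, y2))
      = (\<Sum>a<4 ^ n. \<Sum>u<?N. \<Sum>v<?N. ?G u v * (?P a $$ (x1, y1) * jordan (?P a) \<tau> $$ (u, v)))"
    using assms
    by (simp add: index_cptp[OF \<Phi> jordan_carrier[OF pauli_n_carrier \<tau>]] sum_distrib_left mult_ac)
  also have "\<dots> = (\<Sum>u<?N. \<Sum>v<?N. ?G u v * (\<Sum>a<4 ^ n. ?P a $$ (x1, y1) * jordan (?P a) \<tau> $$ (u, v)))"
    by (simp only: sum.swap[of _ "{..<4 ^ n}" "{..<?N}"] sum_distrib_left)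
  also have "\<dots> = (\<Sum>u<?N. \<Sum>v<?N. ?G u v
      * (2 ^ n / 2 * ((if y1 = u then \<tau> $$ (x1, v) else 0) + (if x1 = v then \<tau> $$ (u, y1) else 0))))"
    using assms by (simp add: sum_pauli_jordan)
  also have "\<dots> = (\<Sum>u<?N. \<Sum>v<?N. 2 ^ n / 2 * (if u = y1 then \<tau> $$ (x1, v) * ?G u v else 0)
      + 2 ^ n / 2 * (if v = x1 then ?G u v * \<tau> $$ (u, y1) else 0))"
    by (intro sum.cong refl) (auto simp: algebra_simps)
  also have "\<dots> = 2 ^ n / 2 * ((\<Sum>u<?N. \<Sum>v<?N. if u = y1 then \<tau> $$ (x1, v) * ?G u v else 0)
      + (\<Sum>u<?N. \<Sum>v<?N. if v = x1 then ?G u v * \<tau> $$ (u, y1) else 0))"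
    by (simp only: sum.distrib sum_distrib_left distrib_left)
  also have "\<dots> = 2 ^ n / 2 * ((\<Sum>v<?N. \<tau> $$ (x1, v) * ?G y1 v) + (\<Sum>u<?N. ?G u x1 * \<tau> $$ (u, y1)))"
    using assms by (simp add: sum_sum_if_fst)
  finally show ?thesis .
qed

lemma index_kron_one_mult_choi:
  assumes \<Phi>: "cptp n \<Phi>" and \<tau>: "\<tau> \<in> carrier_mat (2 ^ n) (2 ^ n)"
    and "x1 < 2 ^ n" and "x2 < 2 ^ n" and "y1 < 2 ^ n" and "y2 < 2 ^ n"
  shows "(kron \<tau> (1\<^sub>m (2 ^ n)) * choi n \<Phi>) $$ (x1 * 2 ^ n + x2, y1 * 2 ^ n + y2)
       = (\<Sum>v<2 ^ n. \<tau> $$ (x1, v) * \<Phi> (ketbra (2 ^ n) y1 v) $$ (x2, y2))"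
proof -
  let ?N = "2 ^ n :: nat"
  have "(kron \<tau> (1\<^sub>m ?N) * choi n \<Phi>) $$ (x1 * ?N + x2, y1 * ?N + y2)
      = (\<Sum>t1<?N. \<Sum>t2<?N. kron \<tau> (1\<^sub>m ?N) $$ (x1 * ?N + x2, t1 * ?N + t2)
                         * choi n \<Phi> $$ (t1 * ?N + t2, y1 * ?N + y2))"
    using assms carrier_matD[OF choi_carrier, of n \<Phi>]
    by (simp add: index_mult_sum mixed_radix_less sum_lessThan_mult del: index_mult_mat(1))
  also have "\<dots> = (\<Sum>t1<?N. \<Sum>t2<?N. (if x2 = t2 then 1 else 0) * (\<tau> $$ (x1, t1) * \<Phi> (ketbra ?N y1 t1) $$ (t2, y2)))"
    using assms by (intro sum.cong refl) (simp add: index_kron_one_right index_choi)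
  also have "\<dots> = (\<Sum>v<?N. \<tau> $$ (x1, v) * \<Phi> (ketbra ?N y1 v) $$ (x2, y2))"
    using assms by (simp add: sum_delta_mult)
  finally show ?thesis .
qed

lemma index_choi_mult_kron_one:
  assumes \<Phi>: "cptp n \<Phi>" and \<tau>: "\<tau> \<in> carrier_mat (2 ^ n) (2 ^ n)"
    and "x1 < 2 ^ n" and "x2 < 2 ^ n" and "y1 < 2 ^ n" and "y2 < 2 ^ n"
  shows "(choi n \<Phi> * kron \<tau> (1\<^sub>m (2 ^ n))) $$ (x1 * 2 ^ n + x2, y1 * 2 ^ n + y2)
       = (\<Sum>u<2 ^ n. \<Phi> (ketbra (2 ^ n) u x1) $$ (x2, y2) * \<tau> $$ (u, y1))"
proof -
  let ?N = "2 ^ n :: nat"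
  have "(choi n \<Phi> * kron \<tau> (1\<^sub>m ?N)) $$ (x1 * ?N + x2, y1 * ?N + y2)
      = (\<Sum>t1<?N. \<Sum>t2<?N. choi n \<Phi> $$ (x1 * ?N + x2, t1 * ?N + t2)
                         * kron \<tau> (1\<^sub>m ?N) $$ (t1 * ?N + t2, y1 * ?N + y2))"
    using assms carrier_matD[OF choi_carrier, of n \<Phi>]
    by (simp add: index_mult_sum mixed_radix_less sum_lessThan_mult del: index_mult_mat(1))
  also have "\<dots> = (\<Sum>t1<?N. \<Sum>t2<?N. (if t2 = y2 then 1 else 0) * (\<Phi> (ketbra ?N t1 x1) $$ (x2, t2) * \<tau> $$ (t1, y1)))"
    using assms by (intro sum.cong refl) (simp add: index_kron_one_right index_choi)
  also have "\<dots> = (\<Sum>u<?N. \<Phi> (ketbra ?N u x1) $$ (x2, y2) * \<tau> $$ (u, y1))"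
    using assms by (simp add: sum_delta_mult)
  finally show ?thesis .
qed

section \<open>Pseudo-density matrices\<close>

abbreviation pauli_words :: "nat \<Rightarrow> nat \<Rightarrow> nat list set" where
  "pauli_words n k \<equiv> {is. length is = k \<and> set is \<subseteq> {..<4 ^ n}}"

abbreviation pauli_tensor :: "nat \<Rightarrow> nat list \<Rightarrow> complex mat" where
  "pauli_tensor n is \<equiv> kron_list (map (pauli_n n) is)"

lemma sum_pauli_words_Suc:
  "(\<Sum>is\<in>pauli_words n (Suc k). f is) = (\<Sum>a<4 ^ n. \<Sum>is\<in>pauli_words n k. f (a # is))"
proof -
  have "pauli_words n (Suc k) = (\<lambda>(is, a). a # is) ` (pauli_words n k \<times> {..<4 ^ n})"
    using lists_length_Suc_eq[of "{..<4 ^ n}" k] by (simp add: conj_commute)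
  moreover have "inj_on (\<lambda>(is, a). a # is) (pauli_words n k \<times> {..<4 ^ n})"
    by (auto simp: inj_on_def)
  ultimately have "(\<Sum>is\<in>pauli_words n (Suc k). f is) = (\<Sum>is\<in>pauli_words n k. \<Sum>a<4 ^ n. f (a # is))"
    by (simp add: sum.reindex sum.cartesian_product split_def)
  also have "\<dots> = (\<Sum>a<4 ^ n. \<Sum>is\<in>pauli_words n k. f (a # is))"
    by (rule sum.swap)
  finally show ?thesis .
qed

lemma sum_pauli_words_one: "(\<Sum>is\<in>pauli_words n 1. f is) = (\<Sum>a<4 ^ n. f [a])"
proof -
  have "pauli_words n 0 = {[]}" by auto
  then show ?thesis unfolding One_nat_def sum_pauli_words_Suc by simp
qed

lemma sum_pauli_words_two: "(\<Sum>is\<in>pauli_words n 2. f is) = (\<Sum>a<4 ^ n. \<Sum>j<4 ^ n. f [a, j])"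
proof -
  have "(\<Sum>is\<in>pauli_words n 2. f is) = (\<Sum>a<4 ^ n. \<Sum>is\<in>pauli_words n 1. f (a # is))"
    using sum_pauli_words_Suc[where k = 1] by (simp only: Suc_1)
  then show ?thesis by (simp only: sum_pauli_words_one)
qed

lemma sum_pauli_words_add:
  "(\<Sum>zs\<in>pauli_words n (p + q). f zs) = (\<Sum>xs\<in>pauli_words n p. \<Sum>ys\<in>pauli_words n q. f (xs @ ys))"
proof (induction p arbitrary: f)
  case 0
  have "pauli_words n 0 = {[]}" by auto
  then show ?case by simp
next
  case (Suc p)
  then show ?case by (simp add: sum_pauli_words_Suc)
qed

lemma pauli_tensor_carrier:
  "pauli_tensor n is \<in> carrier_mat ((2 ^ n) ^ length is) ((2 ^ n) ^ length is)"
proof (induction "is")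
  case (Cons a "is")
  then show ?case using kron_carrier[OF pauli_n_carrier[of n a] Cons.IH] by simp
qed simp

lemma kron_list_append: "kron_list (As @ Bs) = kron (kron_list As) (kron_list Bs)"
proof (induction As)
  case Nil
  show ?case unfolding append_Nil kron_list.simps(1) kron_one_left ..
next
  case (Cons A As)
  then show ?case by (simp add: kron_assoc)
qed

lemma index_pauli_tensor_append:
  assumes "xs \<in> pauli_words n p" and "ys \<in> pauli_words n q"
    and "i1 < (2 ^ n) ^ p" and "j1 < (2 ^ n) ^ p" and "i2 < (2 ^ n) ^ q" and "j2 < (2 ^ n) ^ q"
  shows "pauli_tensor n (xs @ ys) $$ (i1 * (2 ^ n) ^ q + i2, j1 * (2 ^ n) ^ q + j2)
       = pauli_tensor n xs $$ (i1, j1) * pauli_tensor n ys $$ (i2, j2)"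
proof -
  have "pauli_tensor n xs \<in> carrier_mat ((2 ^ n) ^ p) ((2 ^ n) ^ p)"
    and "pauli_tensor n ys \<in> carrier_mat ((2 ^ n) ^ q) ((2 ^ n) ^ q)"
    using assms(1,2) pauli_tensor_carrier by auto
  then show ?thesis using assms(3-) by (simp add: kron_list_append index_kron_pair)
qed

definition pdm_aux :: "nat \<Rightarrow> (nat \<Rightarrow> complex mat \<Rightarrow> complex mat) \<Rightarrow> nat \<Rightarrow> complex mat \<Rightarrow> nat \<Rightarrow> complex mat" where
  "pdm_aux n Mc \<alpha> \<sigma> k = lincomb_mat ((2 ^ n) ^ k) ((2 ^ n) ^ k) (pauli_words n k)
     (\<lambda>is. corr_aux n Mc \<alpha> \<sigma> is / (2 ^ n) ^ k) (pauli_tensor n)"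

lemma pdm_aux_carrier: "pdm_aux n Mc \<alpha> \<sigma> k \<in> carrier_mat ((2 ^ n) ^ k) ((2 ^ n) ^ k)"
  unfolding pdm_aux_def by simp

lemma index_pdm_aux:
  "i < (2 ^ n) ^ k \<Longrightarrow> j < (2 ^ n) ^ k \<Longrightarrow> pdm_aux n Mc \<alpha> \<sigma> k $$ (i, j)
     = (\<Sum>is\<in>pauli_words n k. corr_aux n Mc \<alpha> \<sigma> is / (2 ^ n) ^ k * pauli_tensor n is $$ (i, j))"
  unfolding pdm_aux_def by simp

lemma pdm_eq_pdm_aux: "pdm n \<rho>1 Mc k = pdm_aux n Mc 1 \<rho>1 k"
proof -
  have D: "(2::nat) ^ (k * n) = (2 ^ n) ^ k" by (simp add: power_mult[symmetric] mult.commute)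
  show ?thesis
    unfolding pdm_def pdm_aux_def lincomb_mat_def corr_def Let_def D
    by (rule eq_matI) (simp_all add: sum_distrib_left)
qed

lemma pdm_aux_add:
  assumes ch: "\<forall>\<beta>\<in>{\<alpha>..<\<alpha> + p + q - 1}. cptp n (Mc \<beta>)" and \<sigma>: "\<sigma> \<in> carrier_mat (2 ^ n) (2 ^ n)"
    and "q \<noteq> 0"
  shows "pdm_aux n Mc \<alpha> \<sigma> (p + q) = lincomb_mat ((2 ^ n) ^ p * (2 ^ n) ^ q) ((2 ^ n) ^ p * (2 ^ n) ^ q)
           (pauli_words n p) (\<lambda>_. 1 / (2 ^ n) ^ p)
           (\<lambda>xs. kron (pauli_tensor n xs) (pdm_aux n Mc (\<alpha> + p) (signed_evolution n Mc \<alpha> \<sigma> xs) q))"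
proof (rule eq_mat_mixed_radixI[of _ "(2 ^ n) ^ p" "(2 ^ n) ^ q" "(2 ^ n) ^ p" "(2 ^ n) ^ q"])
  let ?P = "(2 ^ n) ^ p :: nat" and ?Q = "(2 ^ n) ^ q :: nat"
  let ?\<tau> = "signed_evolution n Mc \<alpha> \<sigma>" and ?T = "pauli_tensor n"
  fix i1 i2 j1 j2 assume i1: "i1 < ?P" and i2: "i2 < ?Q" and j1: "j1 < ?P" and j2: "j2 < ?Q"
  have split: "corr_aux n Mc \<alpha> \<sigma> (xs @ ys) / ((2 ^ n) ^ p * (2 ^ n) ^ q) * ?T (xs @ ys) $$ (i1 * ?Q + i2, j1 * ?Q + j2)
      = 1 / (2 ^ n) ^ p * (?T xs $$ (i1, j1) * (corr_aux n Mc (\<alpha> + p) (?\<tau> xs) ys / (2 ^ n) ^ q * ?T ys $$ (i2, j2)))"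
    if xs: "xs \<in> pauli_words n p" and ys: "ys \<in> pauli_words n q" for xs ys
  proof -
    have "corr_aux n Mc \<alpha> \<sigma> (xs @ ys) = corr_aux n Mc (\<alpha> + p) (?\<tau> xs) ys"
      using corr_aux_append[of \<alpha> xs ys n Mc \<sigma>] xs ys ch \<sigma> \<open>q \<noteq> 0\<close> by auto
    with index_pauli_tensor_append[OF xs ys i1 j1 i2 j2] show ?thesis by simp
  qed
  have "pdm_aux n Mc \<alpha> \<sigma> (p + q) $$ (i1 * ?Q + i2, j1 * ?Q + j2)
      = (\<Sum>xs\<in>pauli_words n p. \<Sum>ys\<in>pauli_words n q.
          corr_aux n Mc \<alpha> \<sigma> (xs @ ys) / ((2 ^ n) ^ p * (2 ^ n) ^ q) * ?T (xs @ ys) $$ (i1 * ?Q + i2, j1 * ?Q + j2))"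
    using i1 i2 j1 j2 by (simp add: pdm_aux_def power_add mixed_radix_less sum_pauli_words_add)
  also have "\<dots> = (\<Sum>xs\<in>pauli_words n p. \<Sum>ys\<in>pauli_words n q.
      1 / (2 ^ n) ^ p * (?T xs $$ (i1, j1) * (corr_aux n Mc (\<alpha> + p) (?\<tau> xs) ys / (2 ^ n) ^ q * ?T ys $$ (i2, j2))))"
    by (rule sum.cong[OF refl], rule sum.cong[OF refl], rule split)
  also have "\<dots> = lincomb_mat (?P * ?Q) (?P * ?Q) (pauli_words n p) (\<lambda>_. 1 / (2 ^ n) ^ p)
      (\<lambda>xs. kron (?T xs) (pdm_aux n Mc (\<alpha> + p) (?\<tau> xs) q)) $$ (i1 * ?Q + i2, j1 * ?Q + j2)"
    using i1 i2 j1 j2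
    by (simp add: mixed_radix_less index_kron_pair[OF pauli_tensor_carrier pdm_aux_carrier] index_pdm_aux sum_distrib_left)
  finally show "pdm_aux n Mc \<alpha> \<sigma> (p + q) $$ (i1 * ?Q + i2, j1 * ?Q + j2)
      = lincomb_mat (?P * ?Q) (?P * ?Q) (pauli_words n p) (\<lambda>_. 1 / (2 ^ n) ^ p)
          (\<lambda>xs. kron (?T xs) (pdm_aux n Mc (\<alpha> + p) (?\<tau> xs) q)) $$ (i1 * ?Q + i2, j1 * ?Q + j2)" .
qed (use pdm_aux_carrier[of n Mc \<alpha> \<sigma> "p + q"] in \<open>simp_all add: power_add\<close>)

lemma pdm_aux_one:
  assumes \<sigma>: "\<sigma> \<in> carrier_mat (2 ^ n) (2 ^ n)"
  shows "pdm_aux n Mc \<alpha> \<sigma> 1 = \<sigma>"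
proof (rule eq_matI)
  fix x y assume "x < dim_row \<sigma>" and "y < dim_col \<sigma>"
  then have x: "x < 2 ^ n" and y: "y < 2 ^ n" using \<sigma> by auto
  have "pdm_aux n Mc \<alpha> \<sigma> 1 $$ (x, y)
      = (\<Sum>is\<in>pauli_words n 1. corr_aux n Mc \<alpha> \<sigma> is / (2 ^ n) ^ 1 * pauli_tensor n is $$ (x, y))"
    by (rule index_pdm_aux) (use x y in simp_all)
  also have "\<dots> = (\<Sum>a<4 ^ n. corr_aux n Mc \<alpha> \<sigma> [a] / (2 ^ n) ^ 1 * pauli_tensor n [a] $$ (x, y))"
    by (rule sum_pauli_words_one)
  also have "\<dots> = (\<Sum>a<4 ^ n. mtrace (pauli_n n a * \<sigma>) * pauli_n n a $$ (x, y)) / 2 ^ n"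
    unfolding corr_aux_singleton[OF \<sigma>] using kron_one_right by (simp add: sum_divide_distrib)
  also have "\<dots> = \<sigma> $$ (x, y)"
    using pauli_expansion[OF \<sigma> x y] by simp
  finally show "pdm_aux n Mc \<alpha> \<sigma> 1 $$ (x, y) = \<sigma> $$ (x, y)" .
qed (use \<sigma> in \<open>simp_all add: pdm_aux_def\<close>)

lemma pdm_aux_two:
  assumes \<Phi>: "cptp n (Mc \<alpha>)" and \<sigma>: "\<sigma> \<in> carrier_mat (2 ^ n) (2 ^ n)"
  shows "pdm_aux n Mc \<alpha> \<sigma> 2 = jordan (kron \<sigma> (1\<^sub>m (2 ^ n))) (choi n (Mc \<alpha>))"
proof (rule eq_mat_mixed_radixI[of _ "2 ^ n" "2 ^ n" "2 ^ n" "2 ^ n"])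
  let ?N = "2 ^ n :: nat" and ?P = "pauli_n n"
  let ?W = "\<lambda>a. Mc \<alpha> (jordan (?P a) \<sigma>)"
  fix x1 x2 y1 y2 assume x1: "x1 < ?N" and x2: "x2 < ?N" and y1: "y1 < ?N" and y2: "y2 < ?N"
  have W: "?W a \<in> carrier_mat ?N ?N" for a
    by (rule cptpD(1)[OF \<Phi> jordan_carrier[OF pauli_n_carrier \<sigma>]])
  have "pdm_aux n Mc \<alpha> \<sigma> 2 $$ (x1 * ?N + x2, y1 * ?N + y2)
      = (\<Sum>is\<in>pauli_words n 2. corr_aux n Mc \<alpha> \<sigma> is / (2 ^ n) ^ 2 * pauli_tensor n is $$ (x1 * ?N + x2, y1 * ?N + y2))"
    by (rule index_pdm_aux) (use x1 x2 y1 y2 in \<open>simp_all add: power2_eq_square mixed_radix_less\<close>)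
  also have "\<dots> = (\<Sum>a<4 ^ n. \<Sum>j<4 ^ n.
      corr_aux n Mc \<alpha> \<sigma> [a, j] / (2 ^ n) ^ 2 * pauli_tensor n [a, j] $$ (x1 * ?N + x2, y1 * ?N + y2))"
    by (rule sum_pauli_words_two)
  also have "\<dots> = (\<Sum>a<4 ^ n. \<Sum>j<4 ^ n. mtrace (?P j * ?W a) / (?N * ?N) * (?P a $$ (x1, y1) * ?P j $$ (x2, y2)))"
    unfolding corr_aux_pair[where Mc = Mc, OF \<Phi> \<sigma>] using x1 x2 y1 y2 kron_one_right
    by (simp add: power2_eq_square index_kron_pair[OF pauli_n_carrier pauli_n_carrier])
  also have "\<dots> = (\<Sum>a<4 ^ n. ?P a $$ (x1, y1) * (\<Sum>j<4 ^ n. mtrace (?P j * ?W a) * ?P j $$ (x2, y2))) / (?N * ?N)"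
    by (simp add: sum_distrib_left sum_divide_distrib mult_ac)
  also have "\<dots> = (\<Sum>a<4 ^ n. ?P a $$ (x1, y1) * ?W a $$ (x2, y2)) / ?N"
    by (simp add: pauli_expansion[OF W x2 y2] sum_distrib_left[symmetric] mult.left_commute)
  also have "\<dots> = (1 / 2) * ((\<Sum>v<?N. \<sigma> $$ (x1, v) * Mc \<alpha> (ketbra ?N y1 v) $$ (x2, y2))
                          + (\<Sum>u<?N. Mc \<alpha> (ketbra ?N u x1) $$ (x2, y2) * \<sigma> $$ (u, y1)))"
    using sum_pauli_channel_jordan[OF \<Phi> \<sigma> x1 y1 x2 y2] by simp
  also have "\<dots> = jordan (kron \<sigma> (1\<^sub>m ?N)) (choi n (Mc \<alpha>)) $$ (x1 * ?N + x2, y1 * ?N + y2)"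
    using x1 x2 y1 y2 \<sigma> carrier_matD[OF choi_carrier, of n "Mc \<alpha>"]
    by (simp add: index_kron_one_mult_choi[OF \<Phi> \<sigma>] index_choi_mult_kron_one[OF \<Phi> \<sigma>] jordan_def
        mixed_radix_less del: index_mult_mat(1))
  finally show "pdm_aux n Mc \<alpha> \<sigma> 2 $$ (x1 * ?N + x2, y1 * ?N + y2)
      = jordan (kron \<sigma> (1\<^sub>m ?N)) (choi n (Mc \<alpha>)) $$ (x1 * ?N + x2, y1 * ?N + y2)" .
next
  show "pdm_aux n Mc \<alpha> \<sigma> 2 \<in> carrier_mat (2 ^ n * 2 ^ n) (2 ^ n * 2 ^ n)"
    using pdm_aux_carrier[of n Mc \<alpha> \<sigma> 2] by (simp add: power2_eq_square)
  show "jordan (kron \<sigma> (1\<^sub>m (2 ^ n))) (choi n (Mc \<alpha>)) \<in> carrier_mat (2 ^ n * 2 ^ n) (2 ^ n * 2 ^ n)"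
    by (rule jordan_carrier[OF kron_carrier[OF \<sigma> one_carrier_mat] choi_carrier])
qed

lemma pdm_one:
  assumes "\<rho>1 \<in> carrier_mat (2 ^ n) (2 ^ n)"
  shows "pdm n \<rho>1 Mc 1 = \<rho>1"
  using pdm_aux_one[OF assms] by (simp add: pdm_eq_pdm_aux)

lemma pdm_Suc_eq_lincomb:
  assumes \<rho>: "\<rho>1 \<in> carrier_mat (2 ^ n) (2 ^ n)" and ch: "\<forall>\<beta>\<in>{1..p}. cptp n (Mc \<beta>)"
  shows "pdm n \<rho>1 Mc (Suc p) = lincomb_mat ((2 ^ n) ^ p * 2 ^ n) ((2 ^ n) ^ p * 2 ^ n) (pauli_words n p)
           (\<lambda>_. 1 / (2 ^ n) ^ p) (\<lambda>xs. kron (pauli_tensor n xs) (signed_evolution n Mc 1 \<rho>1 xs))"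
proof -
  have \<tau>: "signed_evolution n Mc 1 \<rho>1 xs \<in> carrier_mat (2 ^ n) (2 ^ n)" if "xs \<in> pauli_words n p" for xs
    using that ch by (intro signed_evolution_carrier \<rho>) auto
  have "pdm n \<rho>1 Mc (p + 1) = lincomb_mat ((2 ^ n) ^ p * (2 ^ n) ^ 1) ((2 ^ n) ^ p * (2 ^ n) ^ 1) (pauli_words n p)
      (\<lambda>_. 1 / (2 ^ n) ^ p) (\<lambda>xs. kron (pauli_tensor n xs) (pdm_aux n Mc (1 + p) (signed_evolution n Mc 1 \<rho>1 xs) 1))"
    unfolding pdm_eq_pdm_aux using ch \<rho> by (intro pdm_aux_add) auto
  also have "\<dots> = lincomb_mat ((2 ^ n) ^ p * 2 ^ n) ((2 ^ n) ^ p * 2 ^ n) (pauli_words n p)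
      (\<lambda>_. 1 / (2 ^ n) ^ p) (\<lambda>xs. kron (pauli_tensor n xs) (signed_evolution n Mc 1 \<rho>1 xs))"
    unfolding power_one_right using pdm_aux_one \<tau> by (intro lincomb_mat_cong) simp
  finally show ?thesis by simp
qed

lemma pdm_Suc_Suc_eq_lincomb:
  assumes \<rho>: "\<rho>1 \<in> carrier_mat (2 ^ n) (2 ^ n)" and ch: "\<forall>\<beta>\<in>{1..Suc p}. cptp n (Mc \<beta>)"
  shows "pdm n \<rho>1 Mc (Suc (Suc p)) = lincomb_mat ((2 ^ n) ^ p * 2 ^ n * 2 ^ n) ((2 ^ n) ^ p * 2 ^ n * 2 ^ n)
           (pauli_words n p) (\<lambda>_. 1 / (2 ^ n) ^ p)
           (\<lambda>xs. kron (pauli_tensor n xs)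
                   (jordan (kron (signed_evolution n Mc 1 \<rho>1 xs) (1\<^sub>m (2 ^ n))) (choi n (Mc (Suc p)))))"
proof -
  have \<tau>: "signed_evolution n Mc 1 \<rho>1 xs \<in> carrier_mat (2 ^ n) (2 ^ n)" if "xs \<in> pauli_words n p" for xs
    using that ch by (intro signed_evolution_carrier \<rho>) auto
  have \<Phi>: "cptp n (Mc (1 + p))" using ch by simp
  have "pdm n \<rho>1 Mc (p + 2) = lincomb_mat ((2 ^ n) ^ p * (2 ^ n) ^ 2) ((2 ^ n) ^ p * (2 ^ n) ^ 2) (pauli_words n p)
      (\<lambda>_. 1 / (2 ^ n) ^ p) (\<lambda>xs. kron (pauli_tensor n xs) (pdm_aux n Mc (1 + p) (signed_evolution n Mc 1 \<rho>1 xs) 2))"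
    unfolding pdm_eq_pdm_aux using ch \<rho> by (intro pdm_aux_add) auto
  also have "\<dots> = lincomb_mat ((2 ^ n) ^ p * 2 ^ n * 2 ^ n) ((2 ^ n) ^ p * 2 ^ n * 2 ^ n) (pauli_words n p)
      (\<lambda>_. 1 / (2 ^ n) ^ p) (\<lambda>xs. kron (pauli_tensor n xs)
         (jordan (kron (signed_evolution n Mc 1 \<rho>1 xs) (1\<^sub>m (2 ^ n))) (choi n (Mc (1 + p)))))"
    unfolding power2_eq_square mult.assoc using pdm_aux_two[where Mc = Mc, OF \<Phi>] \<tau>
    by (intro lincomb_mat_cong) simp
  finally show ?thesis by simp
qed

lemma pdm_Suc_Suc:
  assumes \<rho>: "\<rho>1 \<in> carrier_mat (2 ^ n) (2 ^ n)" and ch: "\<forall>\<beta>\<in>{1..Suc p}. cptp n (Mc \<beta>)"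
  shows "pdm n \<rho>1 Mc (Suc (Suc p))
       = jordan (kron (pdm n \<rho>1 Mc (Suc p)) (1\<^sub>m (2 ^ n))) (kron (1\<^sub>m ((2 ^ n) ^ p)) (choi n (Mc (Suc p))))"
proof -
  let ?N = "2 ^ n :: nat" and ?W = "pauli_words n p" and ?f = "\<lambda>_ :: nat list. 1 / (2 ^ n) ^ p :: complex"
  let ?\<tau> = "signed_evolution n Mc 1 \<rho>1" and ?T = "pauli_tensor n" and ?C = "choi n (Mc (Suc p))"
  let ?B = "kron (1\<^sub>m (?N ^ p)) ?C"
  have ch': "\<forall>\<beta>\<in>{1..p}. cptp n (Mc \<beta>)" using ch by auto
  have \<tau>: "?\<tau> xs \<in> carrier_mat ?N ?N" if "xs \<in> ?W" for xs
    using that ch by (intro signed_evolution_carrier \<rho>) auto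
  have T: "?T xs \<in> carrier_mat (?N ^ p) (?N ^ p)" if "xs \<in> ?W" for xs
    using that pauli_tensor_carrier[of n xs] by simp
  have Y: "\<forall>xs\<in>?W. kron (?T xs) (?\<tau> xs) \<in> carrier_mat (?N ^ p * ?N) (?N ^ p * ?N)"
    using T \<tau> by (blast intro: kron_carrier)
  then have KY: "\<forall>xs\<in>?W. kron (kron (?T xs) (?\<tau> xs)) (1\<^sub>m ?N) \<in> carrier_mat (?N ^ p * ?N * ?N) (?N ^ p * ?N * ?N)"
    by (intro ballI kron_carrier[OF _ one_carrier_mat]) auto
  have B: "?B \<in> carrier_mat (?N ^ p * ?N * ?N) (?N ^ p * ?N * ?N)"
    using kron_carrier[OF one_carrier_mat choi_carrier] by (simp add: mult.assoc)
  have "jordan (kron (pdm n \<rho>1 Mc (Suc p)) (1\<^sub>m ?N)) ?B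
      = jordan (lincomb_mat (?N ^ p * ?N * ?N) (?N ^ p * ?N * ?N) ?W ?f
          (\<lambda>xs. kron (kron (?T xs) (?\<tau> xs)) (1\<^sub>m ?N))) ?B"
    unfolding pdm_Suc_eq_lincomb[OF \<rho> ch'] kron_lincomb_mat[OF Y one_carrier_mat] by simp
  also have "\<dots> = lincomb_mat (?N ^ p * ?N * ?N) (?N ^ p * ?N * ?N) ?W ?f
      (\<lambda>xs. jordan (kron (kron (?T xs) (?\<tau> xs)) (1\<^sub>m ?N)) ?B)"
    by (rule jordan_lincomb_mat[OF KY B])
  also have "\<dots> = pdm n \<rho>1 Mc (Suc (Suc p))"
    unfolding pdm_Suc_Suc_eq_lincomb[OF \<rho> ch] kron_assoc
  proof (rule lincomb_mat_cong)
    fix xs assume xs: "xs \<in> ?W"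
    show "jordan (kron (?T xs) (kron (?\<tau> xs) (1\<^sub>m ?N))) ?B = kron (?T xs) (jordan (kron (?\<tau> xs) (1\<^sub>m ?N)) ?C)"
      by (rule jordan_kron_one_left[OF T[OF xs] kron_carrier[OF \<tau>[OF xs] one_carrier_mat] choi_carrier])
  qed
  finally show ?thesis ..
qed

theorem theorem2:
  fixes n m :: nat and \<rho>1 :: "complex mat" and Mc :: "nat \<Rightarrow> complex mat \<Rightarrow> complex mat"
  assumes "n \<ge> 1" and "m \<ge> 2"
    and "density_matrix n \<rho>1"
    and "\<forall>\<alpha>\<in>{1..m-1}. cptp n (Mc \<alpha>)"
  shows "pdm n \<rho>1 Mc 2 =
           (1 / 2 :: complex) \<cdot>\<^sub>m (kron \<rho>1 (1\<^sub>m (2 ^ n)) * choi n (Mc 1)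
                                 + choi n (Mc 1) * kron \<rho>1 (1\<^sub>m (2 ^ n)))
         \<and> (\<forall>k\<in>{3..m}. pdm n \<rho>1 Mc k =
           (1 / 2 :: complex) \<cdot>\<^sub>m
             (kron (pdm n \<rho>1 Mc (k - 1)) (1\<^sub>m (2 ^ n))
                * kron (1\<^sub>m (2 ^ ((k - 2) * n))) (choi n (Mc (k - 1)))
            + kron (1\<^sub>m (2 ^ ((k - 2) * n))) (choi n (Mc (k - 1)))
                * kron (pdm n \<rho>1 Mc (k - 1)) (1\<^sub>m (2 ^ n))))"
proof -
  have \<rho>: "\<rho>1 \<in> carrier_mat (2 ^ n) (2 ^ n)"
    using assms(3) by (simp add: density_matrix_def psd_def)
  have step: "pdm n \<rho>1 Mc (Suc (Suc p))
      = jordan (kron (pdm n \<rho>1 Mc (Suc p)) (1\<^sub>m (2 ^ n))) (kron (1\<^sub>m (2 ^ (p * n))) (choi n (Mc (Suc p))))"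
    if "Suc (Suc p) \<le> m" for p
  proof -
    have "\<forall>\<beta>\<in>{1..Suc p}. cptp n (Mc \<beta>)" using assms(4) that by auto
    moreover have "(2::nat) ^ (p * n) = (2 ^ n) ^ p" by (simp add: power_mult[symmetric] mult.commute)
    ultimately show ?thesis using pdm_Suc_Suc[OF \<rho>] by simp
  qed
  have "pdm n \<rho>1 Mc 2 = jordan (kron \<rho>1 (1\<^sub>m (2 ^ n))) (choi n (Mc 1))"
    using step[of 0] assms(2) pdm_one[OF \<rho>] kron_one_left by (simp add: numeral_2_eq_2)
  moreover have "pdm n \<rho>1 Mc k = jordan (kron (pdm n \<rho>1 Mc (k - 1)) (1\<^sub>m (2 ^ n)))
      (kron (1\<^sub>m (2 ^ ((k - 2) * n))) (choi n (Mc (k - 1))))" if "k \<in> {3..m}" for k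
  proof -
    define p where "p = k - 2"
    with that have "k = Suc (Suc p)" by auto
    with that show ?thesis using step[of p] by simp
  qed
  ultimately show ?thesis unfolding jordan_def by blast
qed

end
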